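(* Let $(X_t)_{t\in\mathbb{Z}}$ be a real stationary centered Gaussian sequence with covariance $r(t)=\mathbb{E}[X_iX_{i+t}]$, $r(0)=1$, and $r(t)\to0$ as $|t|\to\infty$. Let $H\in L^2(\mathbb{R},\gamma)$, where $\gamma$ is the standard Gaussian measure, have Hermite expansion $H=\sum_{k\ge1}c_kH_k$ (so $c_0=0$, $\sum_k c_k^2k!<\infty$), $H\neq0$, with Hermite rank $k_\ast$, and let $r_H(t)=\mathbb{E}[H(X_0)H(X_t)]$. Then $$\sum_{t\in\mathbb{Z}}|r_H(t)|<\infty\iff\sum_{t\in\mathbb{Z}}|r(t)|^{k_\ast}<\infty.$$ *)

theory Defs
  imports "HOL-Probability.Probability"
begin

definition gauss_measure :: "real measure" where
  "gauss_measure = density lborel std_normal_density"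

text \<open>Probabilists' Hermite polynomials He_k (leading coefficient 1),
  orthogonal w.r.t. gamma with E[He_k^2] = k!.\<close>
fun hermite :: "nat \<Rightarrow> real \<Rightarrow> real" where
  "hermite 0 x = 1"
| "hermite (Suc 0) x = x"
| "hermite (Suc (Suc k)) x = x * hermite (Suc k) x - real (Suc k) * hermite k x"

text \<open>Hermite coefficient c_k of H in L^2(gamma), so that H = sum_k c_k He_k.\<close>
definition hermite_coeff :: "(real \<Rightarrow> real) \<Rightarrow> nat \<Rightarrow> real" where
  "hermite_coeff H k = (\<integral>x. H x * hermite k x \<partial>gauss_measure) / fact k"

definition hermite_rank :: "(real \<Rightarrow> real) \<Rightarrow> nat" where
  "hermite_rank H = (LEAST k. hermite_coeff H k \<noteq> 0)"

definition centered_gaussian_rv :: "'a measure \<Rightarrow> ('a \<Rightarrow> real) \<Rightarrow> bool" where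
  "centered_gaussian_rv M Y \<longleftrightarrow> Y \<in> borel_measurable M \<and>
     ((AE \<omega> in M. Y \<omega> = 0) \<or> (\<exists>\<sigma>>0. distributed M lborel Y (normal_density 0 \<sigma>)))"

definition centered_gaussian_process :: "'a measure \<Rightarrow> ('i \<Rightarrow> 'a \<Rightarrow> real) \<Rightarrow> bool" where
  "centered_gaussian_process M X \<longleftrightarrow>
     (\<forall>S a. finite S \<longrightarrow> centered_gaussian_rv M (\<lambda>\<omega>. \<Sum>i\<in>S. a i * X i \<omega>))"

end

theory Submission
  imports Defs "HOL-Computational_Algebra.Polynomial"
begin

text \<open>
  By Mehler's formula, \<open>E[He\<^sub>j(X\<^sub>0) He\<^sub>k(X\<^sub>t)] = \<delta>\<^sub>j\<^sub>k k! r(t)\<^sup>k\<close>, which follows from the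
  addition formula for Hermite polynomials and the moments of independent Gaussians. The Hermite
  expansion of \<open>H\<close> converges in \<open>L\<^sup>2(\<gamma>)\<close> because the Hermite polynomials are complete (a function
  orthogonal to all of them has vanishing Fourier transform), so \<open>r\<^sub>H(t) = \<Sum>\<^sub>k c\<^sub>k\<^sup>2 k! r(t)\<^sup>k\<close>.
  As \<open>r(t) \<rightarrow> 0\<close>, for all but finitely many \<open>t\<close> this power series with nonnegative coefficients
  is comparable to its lowest order term \<open>c\<^sub>q\<^sup>2 q! r(t)\<^sup>q\<close>, where \<open>q\<close> is the Hermite rank;
  hence \<open>r\<^sub>H\<close> and \<open>|r|\<^sup>q\<close> are summable together.
\<close>

section \<open>Hermite polynomials and Gaussian moments\<close>

definition std_normal_moment :: "nat \<Rightarrow> real" where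
  "std_normal_moment n = (if even n then fact n / (2 ^ (n div 2) * fact (n div 2)) else 0)"

lemma std_normal_moment_0 [simp]: "std_normal_moment 0 = 1"
  by (simp add: std_normal_moment_def)

lemma std_normal_moment_1 [simp]: "std_normal_moment (Suc 0) = 0"
  by (simp add: std_normal_moment_def)

lemma std_normal_moment_Suc_Suc:
  "std_normal_moment (Suc (Suc n)) = real (Suc n) * std_normal_moment n"
proof (cases "even n")
  case True
  then obtain m where n: "n = 2 * m" by blast
  have "std_normal_moment (Suc (Suc n)) = fact (Suc (Suc n)) / (2 ^ Suc m * fact (Suc m))"
    using n by (simp add: std_normal_moment_def)
  also have "fact (Suc (Suc n)) = real (Suc (Suc n)) * real (Suc n) * fact n"
    by (simp add: fact_Suc)
  also have "(2::real) ^ Suc m * fact (Suc m) = real (Suc (Suc n)) * (2 ^ m * fact m)"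
    using n by (simp add: fact_Suc)
  finally show ?thesis
    using n by (simp add: std_normal_moment_def)
next
  case False
  then show ?thesis by (simp add: std_normal_moment_def)
qed

definition gauss_mean :: "real poly \<Rightarrow> real" where
  "gauss_mean p = (\<Sum>i\<le>degree p. coeff p i * std_normal_moment i)"

lemma gauss_mean_altdef:
  "degree p \<le> n \<Longrightarrow> gauss_mean p = (\<Sum>i\<le>n. coeff p i * std_normal_moment i)"
  unfolding gauss_mean_def by (rule sum.mono_neutral_left) (auto simp: coeff_eq_0)

lemma gauss_mean_add: "gauss_mean (p + q) = gauss_mean p + gauss_mean q"
proof -
  let ?n = "max (degree p) (degree q)"
  have "degree (p + q) \<le> ?n"
    by (rule degree_add_le) auto
  then show ?thesis
    by (simp add: gauss_mean_altdef[of _ ?n] gauss_mean_altdef[of p ?n] gauss_mean_altdef[of q ?n]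
        sum.distrib algebra_simps)
qed

lemma gauss_mean_smult: "gauss_mean (smult c p) = c * gauss_mean p"
  by (simp add: gauss_mean_def sum_distrib_left mult.assoc)

lemma gauss_mean_diff: "gauss_mean (p - q) = gauss_mean p - gauss_mean q"
  using gauss_mean_add[of "p - q" q] by simp

lemma gauss_mean_1 [simp]: "gauss_mean 1 = 1"
  by (simp add: gauss_mean_def)

text \<open>Gaussian integration by parts, \<open>E[X p(X)] = E[p'(X)]\<close>.\<close>

lemma gauss_mean_pCons_0: "gauss_mean (pCons 0 p) = gauss_mean (pderiv p)"
proof -
  define n where "n = degree p"
  have "gauss_mean (pCons 0 p) = (\<Sum>i\<le>Suc n. coeff (pCons 0 p) i * std_normal_moment i)"
    by (rule gauss_mean_altdef) (simp add: n_def degree_pCons_le)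
  also have "\<dots> = (\<Sum>i\<le>n. coeff p i * std_normal_moment (Suc i))"
    by (subst sum.atMost_Suc_shift) simp
  also have "\<dots> = (\<Sum>i\<le>Suc n. coeff p i * std_normal_moment (Suc i))"
    by (simp add: n_def coeff_eq_0)
  also have "\<dots> = (\<Sum>i\<le>n. coeff p (Suc i) * std_normal_moment (Suc (Suc i)))"
    by (subst sum.atMost_Suc_shift) simp
  also have "\<dots> = (\<Sum>i\<le>n. coeff (pderiv p) i * std_normal_moment i)"
    by (simp add: coeff_pderiv std_normal_moment_Suc_Suc mult_ac)
  also have "\<dots> = gauss_mean (pderiv p)"
    by (rule gauss_mean_altdef[symmetric]) (simp add: n_def degree_pderiv)
  finally show ?thesis .
qed

fun hermite_poly :: "nat \<Rightarrow> real poly" where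
  "hermite_poly 0 = 1"
| "hermite_poly (Suc 0) = [:0, 1:]"
| "hermite_poly (Suc (Suc k)) = pCons 0 (hermite_poly (Suc k)) - smult (real (Suc k)) (hermite_poly k)"

lemma poly_hermite_poly: "poly (hermite_poly k) x = hermite k x"
  by (induction k rule: hermite_poly.induct) (auto simp: algebra_simps)

lemma hermite_poly_Suc:
  "hermite_poly (Suc k) = pCons 0 (hermite_poly k) - smult (real k) (hermite_poly (k - 1))"
  by (cases k) auto

lemma mult_hermite: "x * hermite k x = hermite (Suc k) x + real k * hermite (k - 1) x"
  by (cases k) auto

lemma pderiv_hermite_poly: "pderiv (hermite_poly k) = smult (real k) (hermite_poly (k - 1))"
proof -
  have "pderiv (hermite_poly (Suc k)) = smult (real (Suc k)) (hermite_poly k) \<and>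
    pderiv (hermite_poly (Suc (Suc k))) = smult (real (Suc (Suc k))) (hermite_poly (Suc k))" for k
  proof (induction k)
    case 0
    then show ?case by (simp add: pderiv_pCons pderiv_diff)
  next
    case (Suc k)
    let ?H = hermite_poly
    have "pderiv (?H (Suc (Suc (Suc k)))) = ?H (Suc (Suc k)) + pCons 0 (pderiv (?H (Suc (Suc k))))
        - smult (real (Suc (Suc k))) (pderiv (?H (Suc k)))"
      by (simp only: hermite_poly.simps(3)) (simp add: pderiv_pCons pderiv_diff pderiv_smult)
    also have "\<dots> = ?H (Suc (Suc k)) + smult (real (Suc (Suc k)))
        (pCons 0 (?H (Suc k)) - smult (real (Suc k)) (?H k))"
      using Suc.IH by (simp add: smult_diff_right)
    also have "\<dots> = smult (real (Suc (Suc (Suc k)))) (?H (Suc (Suc k)))"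
    proof -
      have "q + smult c q = smult (c + 1) q" for q :: "real poly" and c
        by (simp add: smult_add_left)
      moreover have "pCons 0 (?H (Suc k)) - smult (1 + real k) (?H k) = ?H (Suc (Suc k))"
        by simp
      ultimately show ?thesis
        by (simp del: hermite_poly.simps add: add.commute)
    qed
    finally show ?case
      using Suc.IH by simp
  qed
  then show ?thesis
    by (cases k) auto
qed

lemma gauss_mean_hermite_poly_mult_Suc:
  "gauss_mean (hermite_poly j * hermite_poly (Suc k)) =
    real j * gauss_mean (hermite_poly (j - 1) * hermite_poly k)"
proof -
  let ?H = hermite_poly
  have "?H j * ?H (Suc k) = pCons 0 (?H j * ?H k) - smult (real k) (?H j * ?H (k - 1))"
    by (simp add: hermite_poly_Suc algebra_simps)
  then have "gauss_mean (?H j * ?H (Suc k)) =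
      gauss_mean (pderiv (?H j * ?H k)) - real k * gauss_mean (?H j * ?H (k - 1))"
    by (simp add: gauss_mean_diff gauss_mean_smult gauss_mean_pCons_0)
  also have "pderiv (?H j * ?H k) =
      smult (real j) (?H (j - 1) * ?H k) + smult (real k) (?H j * ?H (k - 1))"
    by (simp add: pderiv_mult pderiv_hermite_poly ac_simps)
  finally show ?thesis
    by (simp add: gauss_mean_add gauss_mean_smult)
qed

lemma gauss_mean_hermite_poly_mult:
  "gauss_mean (hermite_poly j * hermite_poly k) = (if j = k then fact k else 0)"
proof (induction k arbitrary: j)
  case 0
  show ?case
  proof (cases j)
    case (Suc j')
    then show ?thesis
      using gauss_mean_hermite_poly_mult_Suc[of 0 j'] by (simp add: mult.commute)
  qed simp
next
  case (Suc k)
  then show ?case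
    using gauss_mean_hermite_poly_mult_Suc[of 0 k] by (cases j) (simp_all add: gauss_mean_hermite_poly_mult_Suc)
qed

lemma gauss_mean_hermite_poly: "gauss_mean (hermite_poly k) = (if k = 0 then 1 else 0)"
  using gauss_mean_hermite_poly_mult[of 0 k] by simp

lemma binomial_convolution_Suc:
  fixes w z :: "nat \<Rightarrow> real"
  shows "(\<Sum>i\<le>Suc k. real (Suc k choose i) * w i * z (Suc k - i)) =
    (\<Sum>i\<le>k. real (k choose i) * w (Suc i) * z (k - i)) +
    (\<Sum>i\<le>k. real (k choose i) * w i * z (Suc k - i))"
proof -
  have "(\<Sum>i\<le>Suc k. real (Suc k choose i) * w i * z (Suc k - i)) =
      w 0 * z (Suc k) + (\<Sum>i\<le>k. real (k choose i) * w (Suc i) * z (k - i)) +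
      (\<Sum>i\<le>k. real (k choose Suc i) * w (Suc i) * z (k - i))"
    by (subst sum.atMost_Suc_shift) (simp add: sum.distrib algebra_simps)
  moreover have "w 0 * z (Suc k) + (\<Sum>i\<le>k. real (k choose Suc i) * w (Suc i) * z (k - i)) =
      (\<Sum>i\<le>k. real (k choose i) * w i * z (Suc k - i))"
  proof (cases k)
    case (Suc m)
    have "(\<Sum>i\<le>k. real (k choose Suc i) * w (Suc i) * z (k - i)) =
        (\<Sum>i\<le>m. real (k choose Suc i) * w (Suc i) * z (k - i))"
      unfolding Suc by (simp add: sum.atMost_Suc binomial_eq_0 del: binomial_Suc_Suc)
    then show ?thesis
      unfolding Suc by (subst (2) sum.atMost_Suc_shift) simp
  qed simp
  ultimately show ?thesis
    by simp
qed

lemma binomial_convolution_times_index: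
  fixes f :: "nat \<Rightarrow> nat \<Rightarrow> real"
  shows "(\<Sum>i\<le>Suc m. real (Suc m choose i) * real i * f (i - 1) (Suc m - i)) =
    real (Suc m) * (\<Sum>i\<le>m. real (m choose i) * f i (m - i))"
proof -
  have "real (Suc m choose Suc i) * real (Suc i) = real (Suc m) * real (m choose i)" for i
    using Suc_times_binomial_eq[of m i] by (metis of_nat_mult mult.commute)
  then show ?thesis
    by (subst sum.atMost_Suc_shift) (simp add: sum_distrib_left mult.assoc[symmetric])
qed

lemma binomial_convolution_times_coindex:
  fixes f :: "nat \<Rightarrow> nat \<Rightarrow> real"
  shows "(\<Sum>i\<le>Suc m. real (Suc m choose i) * real (Suc m - i) * f i (m - i)) =
    real (Suc m) * (\<Sum>i\<le>m. real (m choose i) * f i (m - i))"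
proof -
  have "real (Suc m choose i) * real (Suc m - i) = real (Suc m) * real (m choose i)" for i
    using binomial_absorb_comp[of "Suc m" i] by (metis of_nat_mult mult.commute diff_Suc_1)
  then have "(\<Sum>i\<le>m. real (Suc m choose i) * real (Suc m - i) * f i (m - i)) =
      (\<Sum>i\<le>m. real (Suc m) * (real (m choose i) * f i (m - i)))"
    by (intro sum.cong refl) (simp only: mult.assoc[symmetric])
  then show ?thesis
    by (simp add: sum_distrib_left del: of_nat_Suc)
qed

definition hermite_convolution :: "real \<Rightarrow> real \<Rightarrow> real \<Rightarrow> real \<Rightarrow> nat \<Rightarrow> real" where
  "hermite_convolution a b x y k =
    (\<Sum>i\<le>k. real (k choose i) * (a ^ i * hermite i x) * (b ^ (k - i) * hermite (k - i) y))"

lemma hermite_convolution_recurrence: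
  assumes ab: "a\<^sup>2 + b\<^sup>2 = 1"
  shows "(a * x + b * y) * hermite_convolution a b x y (Suc m) =
    hermite_convolution a b x y (Suc (Suc m)) + real (Suc m) * hermite_convolution a b x y m"
proof -
  define u where "u i = a ^ i * hermite i x" for i
  define v where "v i = b ^ i * hermite i y" for i
  define k where "k = Suc m"
  have conv: "hermite_convolution a b x y n = (\<Sum>i\<le>n. real (n choose i) * u i * v (n - i))" for n
    by (simp add: hermite_convolution_def u_def v_def)
  have ux: "a * x * u i = u (Suc i) + a\<^sup>2 * (real i * u (i - 1))" for i
    by (cases i) (auto simp: u_def algebra_simps power2_eq_square)
  have vy: "b * y * v i = v (Suc i) + b\<^sup>2 * (real i * v (i - 1))" for i
    by (cases i) (auto simp: v_def algebra_simps power2_eq_square)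
  have "(a * x + b * y) * hermite_convolution a b x y k =
      (\<Sum>i\<le>k. real (k choose i) * (a * x * u i) * v (k - i)) +
      (\<Sum>i\<le>k. real (k choose i) * u i * (b * y * v (k - i)))"
    by (simp add: conv sum_distrib_left sum.distrib algebra_simps)
  also have "\<dots> = ((\<Sum>i\<le>k. real (k choose i) * u (Suc i) * v (k - i)) +
        (\<Sum>i\<le>k. real (k choose i) * u i * v (Suc k - i)))
      + (a\<^sup>2 * (\<Sum>i\<le>k. real (k choose i) * real i * (u (i - 1) * v (k - i))) +
         b\<^sup>2 * (\<Sum>i\<le>k. real (k choose i) * real (k - i) * (u i * v (k - i - 1))))"
    unfolding ux vy
    by (simp add: distrib_left distrib_right sum.distrib sum_distrib_left mult_ac Suc_diff_le)
  also have "(\<Sum>i\<le>k. real (k choose i) * u (Suc i) * v (k - i)) +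
        (\<Sum>i\<le>k. real (k choose i) * u i * v (Suc k - i)) = hermite_convolution a b x y (Suc k)"
    unfolding conv by (rule binomial_convolution_Suc[symmetric])
  also have "(\<Sum>i\<le>k. real (k choose i) * real i * (u (i - 1) * v (k - i))) =
      real k * hermite_convolution a b x y m"
    using binomial_convolution_times_index[of m "\<lambda>i j. u i * v j"] by (simp add: k_def conv mult.assoc)
  also have "(\<Sum>i\<le>k. real (k choose i) * real (k - i) * (u i * v (k - i - 1))) =
      real k * hermite_convolution a b x y m"
    using binomial_convolution_times_coindex[of m "\<lambda>i j. u i * v j"] by (simp add: k_def conv mult.assoc)
  also have "a\<^sup>2 * (real k * hermite_convolution a b x y m) + b\<^sup>2 * (real k * hermite_convolution a b x y m) =
      real k * hermite_convolution a b x y m"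
    using ab by (metis distrib_right mult_1)
  finally show ?thesis
    by (simp add: k_def)
qed

lemma hermite_addition:
  assumes "a\<^sup>2 + b\<^sup>2 = 1"
  shows "hermite k (a * x + b * y) = hermite_convolution a b x y k"
proof -
  have "hermite k (a * x + b * y) = hermite_convolution a b x y k \<and>
      hermite (Suc k) (a * x + b * y) = hermite_convolution a b x y (Suc k)"
  proof (induction k)
    case 0
    then show ?case by (simp add: hermite_convolution_def)
  next
    case (Suc k)
    then show ?case
      using hermite_convolution_recurrence[OF assms, of x y k] by simp
  qed
  then show ?thesis ..
qed

lemma prob_space_gauss_measure: "prob_space gauss_measure"
  unfolding gauss_measure_def by (rule prob_space_normal_density) simp

lemma space_gauss_measure [simp]: "space gauss_measure = UNIV"
  by (simp add: gauss_measure_def)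

lemma sets_gauss_measure [simp]: "sets gauss_measure = sets borel"
  by (simp add: gauss_measure_def)

lemma measurable_gauss_measure [simp]: "measurable gauss_measure N = measurable borel N"
  by (rule measurable_cong_sets) auto

lemma borel_measurable_poly [measurable]: "poly (p :: real poly) \<in> borel_measurable borel"
  by (intro borel_measurable_continuous_onI continuous_on_poly continuous_on_id)

lemma borel_measurable_hermite [measurable]: "hermite k \<in> borel_measurable borel"
  using borel_measurable_poly[of "hermite_poly k"] by (simp add: poly_hermite_poly[abs_def])

lemma integrable_gauss_measure_iff:
  fixes g :: "real \<Rightarrow> real"
  assumes [measurable]: "g \<in> borel_measurable borel"
  shows "integrable gauss_measure g \<longleftrightarrow> integrable lborel (\<lambda>x. std_normal_density x * g x)"
  unfolding gauss_measure_def by (subst integrable_density) auto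

lemma integral_gauss_measure:
  fixes g :: "real \<Rightarrow> real"
  assumes [measurable]: "g \<in> borel_measurable borel"
  shows "integral\<^sup>L gauss_measure g = (\<integral>x. std_normal_density x * g x \<partial>lborel)"
  unfolding gauss_measure_def by (subst integral_density) auto

lemma integrable_gauss_power: "integrable gauss_measure (\<lambda>x. x ^ n)"
  by (subst integrable_gauss_measure_iff) (auto intro: integrable_std_normal_moment)

lemma integral_gauss_power: "(\<integral>x. x ^ n \<partial>gauss_measure) = std_normal_moment n"
proof (cases "even n")
  case True
  then obtain k where "n = 2 * k" by blast
  then show ?thesis
    using integral_std_normal_moment_even[of k] by (simp add: integral_gauss_measure std_normal_moment_def)
next
  case False
  then obtain k where "n = 2 * k + 1" by (metis oddE)
  then show ?thesis
    using integral_std_normal_moment_odd[of k] by (simp add: integral_gauss_measure std_normal_moment_def)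
qed

lemma integrable_gauss_poly: "integrable gauss_measure (poly p)"
  unfolding poly_altdef[abs_def]
  by (intro Bochner_Integration.integrable_sum integrable_mult_right integrable_gauss_power)

lemma integral_gauss_poly: "(\<integral>x. poly p x \<partial>gauss_measure) = gauss_mean p"
  unfolding poly_altdef gauss_mean_def
  by (subst Bochner_Integration.integral_sum)
    (auto intro!: integrable_mult_right integrable_gauss_power simp: integral_gauss_power)

lemma integrable_gauss_hermite_mult: "integrable gauss_measure (\<lambda>x. hermite j x * hermite k x)"
proof -
  have "poly (hermite_poly j * hermite_poly k) = (\<lambda>x. hermite j x * hermite k x)"
    by (simp add: fun_eq_iff poly_mult poly_hermite_poly)
  then show ?thesis
    using integrable_gauss_poly[of "hermite_poly j * hermite_poly k"] by simp
qed

lemma integral_gauss_hermite_mult: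
  "(\<integral>x. hermite j x * hermite k x \<partial>gauss_measure) = (if j = k then fact k else 0)"
  using integral_gauss_poly[of "hermite_poly j * hermite_poly k"]
  by (simp add: poly_mult poly_hermite_poly gauss_mean_hermite_poly_mult)

lemma
  fixes g :: "real \<Rightarrow> real"
  assumes W: "distributed M lborel W std_normal_density"
    and [measurable]: "g \<in> borel_measurable borel"
  shows integrable_std_normal_distributed_iff:
      "integrable M (\<lambda>\<omega>. g (W \<omega>)) \<longleftrightarrow> integrable gauss_measure g"
    and integral_std_normal_distributed:
      "(\<integral>\<omega>. g (W \<omega>) \<partial>M) = integral\<^sup>L gauss_measure g"
  using distributed_integrable[OF W, of g] distributed_integral[OF W, of g]
  by (auto simp: integrable_gauss_measure_iff integral_gauss_measure)

lemma sum_atMost_double_even: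
  fixes f :: "nat \<Rightarrow> real"
  assumes "\<And>p. odd p \<Longrightarrow> f p = 0"
  shows "(\<Sum>p\<le>2 * m. f p) = (\<Sum>i\<le>m. f (2 * i))"
proof (induction m)
  case (Suc m)
  have "(\<Sum>p\<le>2 * Suc m. f p) = (\<Sum>p\<le>2 * m. f p) + f (Suc (2 * m)) + f (Suc (Suc (2 * m)))"
    by (simp add: sum.atMost_Suc)
  then show ?case
    using Suc assms[of "Suc (2 * m)"] by (simp add: sum.atMost_Suc)
qed simp

lemma binomial_std_normal_moment_even:
  assumes "i \<le> m"
  shows "real (2 * m choose 2 * i) * std_normal_moment (2 * i) * std_normal_moment (2 * m - 2 * i) =
    real (m choose i) * std_normal_moment (2 * m)"
proof -
  have e: "2 * m - 2 * i = 2 * (m - i)"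
    by simp
  have c1: "real (2 * m choose 2 * i) = fact (2 * m) / (fact (2 * i) * fact (2 * (m - i)))"
    using assms by (subst binomial_fact) (auto simp: e)
  have c2: "real (m choose i) = fact m / (fact i * fact (m - i))"
    using assms by (subst binomial_fact) auto
  have p: "(2::real) ^ m = 2 ^ i * 2 ^ (m - i)"
    using assms by (simp add: power_add[symmetric])
  have g: "std_normal_moment (2 * j) = fact (2 * j) / (2 ^ j * fact j)" for j
    by (simp add: std_normal_moment_def)
  show ?thesis
    unfolding e c1 c2 p g by (simp add: divide_simps)
qed

text \<open>The \<open>n\<close>-th moment of \<open>a U + Z\<close> for independent standard normal \<open>U\<close>, \<open>Z\<close>, computed in two ways.\<close>

lemma std_normal_moment_binomial:
  "sqrt (a\<^sup>2 + 1) ^ n * std_normal_moment n =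
    (\<Sum>p\<le>n. real (n choose p) * a ^ p * (std_normal_moment p * std_normal_moment (n - p)))"
proof (cases "even n")
  case False
  have "std_normal_moment p * std_normal_moment (n - p) = 0" if "p \<le> n" for p
    using False that by (cases "even p") (auto simp: std_normal_moment_def)
  then have "(\<Sum>p\<le>n. real (n choose p) * a ^ p * (std_normal_moment p * std_normal_moment (n - p))) = 0"
    by (intro sum.neutral) auto
  then show ?thesis
    using False by (simp add: std_normal_moment_def)
next
  case True
  then obtain m where n: "n = 2 * m" by blast
  have "sqrt (a\<^sup>2 + 1) ^ n = (a\<^sup>2 + 1) ^ m"
    by (simp add: n power_mult)
  also have "\<dots> = (\<Sum>i\<le>m. real (m choose i) * (a\<^sup>2) ^ i)"
    by (subst binomial_ring) simp
  finally have lhs: "sqrt (a\<^sup>2 + 1) ^ n * std_normal_moment n =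
      (\<Sum>i\<le>m. real (m choose i) * a ^ (2 * i) * std_normal_moment (2 * m))"
    by (simp add: sum_distrib_right n power_mult)
  have "(\<Sum>p\<le>n. real (n choose p) * a ^ p * (std_normal_moment p * std_normal_moment (n - p))) =
      (\<Sum>i\<le>m. real (2 * m choose 2 * i) * a ^ (2 * i) *
        (std_normal_moment (2 * i) * std_normal_moment (2 * m - 2 * i)))"
    unfolding n by (rule sum_atMost_double_even) (simp add: std_normal_moment_def)
  also have "\<dots> = (\<Sum>i\<le>m. real (m choose i) * a ^ (2 * i) * std_normal_moment (2 * m))"
  proof (intro sum.cong refl)
    fix i
    assume "i \<in> {..m}"
    then show "real (2 * m choose 2 * i) * a ^ (2 * i) *
        (std_normal_moment (2 * i) * std_normal_moment (2 * m - 2 * i)) =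
        real (m choose i) * a ^ (2 * i) * std_normal_moment (2 * m)"
      using binomial_std_normal_moment_even[of i m] by (simp add: mult_ac)
  qed
  finally show ?thesis
    using lhs by simp
qed

lemma abs_mult_le_sum_power2: "\<bar>(x::real) * y\<bar> \<le> x\<^sup>2 + y\<^sup>2"
proof -
  have "2 * \<bar>x\<bar> * \<bar>y\<bar> \<le> x\<^sup>2 + y\<^sup>2"
    using sum_squares_bound[of "\<bar>x\<bar>" "\<bar>y\<bar>"] by simp
  moreover have "0 \<le> \<bar>x\<bar> * \<bar>y\<bar>"
    by simp
  ultimately show ?thesis
    unfolding abs_mult by linarith
qed

text \<open>
  The laws of all the combinations \<open>a U + Z\<close> determine the joint law of \<open>(U, Z)\<close> as that of two
  independent standard normals.
\<close>

locale std_normal_pair = prob_space M for M :: "'a measure" +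
  fixes U Z :: "'a \<Rightarrow> real"
  assumes distributed_U: "distributed M lborel U std_normal_density"
    and distributed_Z: "distributed M lborel Z std_normal_density"
    and distributed_combination:
      "\<And>a. distributed M lborel (\<lambda>\<omega>. a * U \<omega> + Z \<omega>) (normal_density 0 (sqrt (a\<^sup>2 + 1)))"
begin

lemma measurable_U [measurable]: "U \<in> borel_measurable M"
  using distributed_U by (auto dest: distributed_measurable)

lemma measurable_Z [measurable]: "Z \<in> borel_measurable M"
  using distributed_Z by (auto dest: distributed_measurable)

lemma integrable_power_mult_power: "integrable M (\<lambda>\<omega>. U \<omega> ^ p * Z \<omega> ^ q)"
proof (rule Bochner_Integration.integrable_bound)
  have "integrable M (\<lambda>\<omega>. U \<omega> ^ (2 * p))" "integrable M (\<lambda>\<omega>. Z \<omega> ^ (2 * q))"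
    using integrable_std_normal_distributed_iff[OF distributed_U, of "\<lambda>x. x ^ (2 * p)"]
      integrable_std_normal_distributed_iff[OF distributed_Z, of "\<lambda>x. x ^ (2 * q)"]
    by (simp_all add: integrable_gauss_power)
  then show "integrable M (\<lambda>\<omega>. U \<omega> ^ (2 * p) + Z \<omega> ^ (2 * q))"
    by (rule Bochner_Integration.integrable_add)
  show "AE \<omega> in M. norm (U \<omega> ^ p * Z \<omega> ^ q) \<le> norm (U \<omega> ^ (2 * p) + Z \<omega> ^ (2 * q))"
    using abs_mult_le_sum_power2 by (intro AE_I2) (simp add: power_even_eq)
qed simp

lemma integral_combination_power:
  "(\<integral>\<omega>. (a * U \<omega> + Z \<omega>) ^ n \<partial>M) = sqrt (a\<^sup>2 + 1) ^ n * std_normal_moment n"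
proof -
  define s where "s = sqrt (a\<^sup>2 + 1)"
  have s: "s > 0"
    unfolding s_def by (simp add: add_nonneg_pos)
  have "distributed M lborel (\<lambda>\<omega>. (a * U \<omega> + Z \<omega> - 0) / s) std_normal_density"
    using normal_standard_normal_convert[OF s] distributed_combination[of a] by (simp add: s_def)
  then have "(\<integral>\<omega>. ((a * U \<omega> + Z \<omega>) / s) ^ n \<partial>M) = std_normal_moment n"
    using integral_std_normal_distributed[of M _ "\<lambda>x. x ^ n"] by (simp add: integral_gauss_power)
  moreover have "(a * U \<omega> + Z \<omega>) ^ n = s ^ n * ((a * U \<omega> + Z \<omega>) / s) ^ n" for \<omega>
    using s by (simp add: power_divide)
  ultimately show ?thesis
    by (simp add: s_def)
qed

lemma integral_power_mult_power:
  "(\<integral>\<omega>. U \<omega> ^ p * Z \<omega> ^ q \<partial>M) = std_normal_moment p * std_normal_moment q"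
proof -
  define n where "n = p + q"
  have "\<forall>a. (\<Sum>j\<le>n. (real (n choose j) * (\<integral>\<omega>. U \<omega> ^ j * Z \<omega> ^ (n - j) \<partial>M)) * a ^ j) =
      (\<Sum>j\<le>n. (real (n choose j) * (std_normal_moment j * std_normal_moment (n - j))) * a ^ j)"
  proof
    fix a
    have "(\<lambda>\<omega>. (a * U \<omega> + Z \<omega>) ^ n) =
        (\<lambda>\<omega>. \<Sum>j\<le>n. real (n choose j) * a ^ j * (U \<omega> ^ j * Z \<omega> ^ (n - j)))"
      by (simp add: fun_eq_iff binomial_ring power_mult_distrib mult_ac)
    then have "(\<integral>\<omega>. (a * U \<omega> + Z \<omega>) ^ n \<partial>M) =
        (\<Sum>j\<le>n. real (n choose j) * a ^ j * (\<integral>\<omega>. U \<omega> ^ j * Z \<omega> ^ (n - j) \<partial>M))"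
      by (simp add: Bochner_Integration.integral_sum integrable_power_mult_power)
    then show "(\<Sum>j\<le>n. (real (n choose j) * (\<integral>\<omega>. U \<omega> ^ j * Z \<omega> ^ (n - j) \<partial>M)) * a ^ j) =
        (\<Sum>j\<le>n. (real (n choose j) * (std_normal_moment j * std_normal_moment (n - j))) * a ^ j)"
      unfolding integral_combination_power std_normal_moment_binomial by (simp add: mult_ac)
  qed
  then have "real (n choose p) * (\<integral>\<omega>. U \<omega> ^ p * Z \<omega> ^ (n - p) \<partial>M) =
      real (n choose p) * (std_normal_moment p * std_normal_moment (n - p))"
    unfolding polyfun_eq_coeffs n_def by (meson le_add1)
  then show ?thesis
    by (simp add: n_def)
qed

lemma
  shows integrable_poly_mult_poly: "integrable M (\<lambda>\<omega>. poly f (U \<omega>) * poly g (Z \<omega>))"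
    and integral_poly_mult_poly: "(\<integral>\<omega>. poly f (U \<omega>) * poly g (Z \<omega>) \<partial>M) = gauss_mean f * gauss_mean g"
proof -
  have expand: "(\<lambda>\<omega>. poly f (U \<omega>) * poly g (Z \<omega>)) =
      (\<lambda>\<omega>. \<Sum>i\<le>degree f. \<Sum>j\<le>degree g. coeff f i * coeff g j * (U \<omega> ^ i * Z \<omega> ^ j))"
    unfolding poly_altdef sum_product by (intro ext sum.cong refl) (simp add: mult_ac)
  show "integrable M (\<lambda>\<omega>. poly f (U \<omega>) * poly g (Z \<omega>))"
    unfolding expand
    by (intro Bochner_Integration.integrable_sum integrable_mult_right integrable_power_mult_power)
  have "(\<integral>\<omega>. poly f (U \<omega>) * poly g (Z \<omega>) \<partial>M) =
      (\<Sum>i\<le>degree f. \<Sum>j\<le>degree g. coeff f i * coeff g j * (std_normal_moment i * std_normal_moment j))"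
    unfolding expand
    by (subst Bochner_Integration.integral_sum, fast intro: Bochner_Integration.integrable_sum
          integrable_mult_right integrable_power_mult_power, intro sum.cong refl,
        subst Bochner_Integration.integral_sum, fast intro: integrable_mult_right integrable_power_mult_power)
      (simp add: integral_power_mult_power)
  also have "\<dots> = gauss_mean f * gauss_mean g"
    unfolding gauss_mean_def sum_product by (intro sum.cong refl) (simp add: mult_ac)
  finally show "(\<integral>\<omega>. poly f (U \<omega>) * poly g (Z \<omega>) \<partial>M) = gauss_mean f * gauss_mean g" .
qed

text \<open>
  By the addition formula, \<open>He\<^sub>j(U) He\<^sub>k(\<rho> U + s Z)\<close> is a combination of products
  \<open>(He\<^sub>j He\<^sub>i)(U) He\<^sub>k\<^sub>-\<^sub>i(Z)\<close>, and only the term \<open>i = k\<close> has nonzero mean.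
\<close>

lemma
  assumes "\<rho>\<^sup>2 + s\<^sup>2 = 1"
  shows integrable_hermite_correlated:
      "integrable M (\<lambda>\<omega>. hermite j (U \<omega>) * hermite k (\<rho> * U \<omega> + s * Z \<omega>))"
    and integral_hermite_correlated:
      "(\<integral>\<omega>. hermite j (U \<omega>) * hermite k (\<rho> * U \<omega> + s * Z \<omega>) \<partial>M) =
        (if j = k then fact k * \<rho> ^ k else 0)"
proof -
  let ?H = hermite_poly
  have expand: "(\<lambda>\<omega>. hermite j (U \<omega>) * hermite k (\<rho> * U \<omega> + s * Z \<omega>)) =
      (\<lambda>\<omega>. \<Sum>i\<le>k. real (k choose i) * \<rho> ^ i * s ^ (k - i) *
        (poly (?H j * ?H i) (U \<omega>) * poly (?H (k - i)) (Z \<omega>)))"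
    unfolding hermite_addition[OF assms] hermite_convolution_def sum_distrib_left
    by (intro ext sum.cong refl) (simp add: poly_mult poly_hermite_poly mult_ac)
  show "integrable M (\<lambda>\<omega>. hermite j (U \<omega>) * hermite k (\<rho> * U \<omega> + s * Z \<omega>))"
    unfolding expand by (intro Bochner_Integration.integrable_sum integrable_mult_right integrable_poly_mult_poly)
  have "(\<integral>\<omega>. hermite j (U \<omega>) * hermite k (\<rho> * U \<omega> + s * Z \<omega>) \<partial>M) =
      (\<Sum>i\<le>k. real (k choose i) * \<rho> ^ i * s ^ (k - i) * (gauss_mean (?H j * ?H i) * gauss_mean (?H (k - i))))"
    unfolding expand
    by (simp add: Bochner_Integration.integral_sum integrable_poly_mult_poly integral_poly_mult_poly
        del: poly_mult)
  also have "\<dots> = (\<Sum>i\<in>{k}. real (k choose i) * \<rho> ^ i * s ^ (k - i) *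
      (gauss_mean (?H j * ?H i) * gauss_mean (?H (k - i))))"
    by (rule sum.mono_neutral_right) (auto simp: gauss_mean_hermite_poly)
  also have "\<dots> = (if j = k then fact k * \<rho> ^ k else 0)"
    by (simp add: gauss_mean_hermite_poly gauss_mean_hermite_poly_mult)
  finally show "(\<integral>\<omega>. hermite j (U \<omega>) * hermite k (\<rho> * U \<omega> + s * Z \<omega>) \<partial>M) =
      (if j = k then fact k * \<rho> ^ k else 0)" .
qed

end

section \<open>Hermite expansions in \<open>L\<^sup>2(\<gamma>)\<close>\<close>

definition square_integrable :: "'b measure \<Rightarrow> ('b \<Rightarrow> real) \<Rightarrow> bool" where
  "square_integrable N f \<longleftrightarrow> f \<in> borel_measurable N \<and> integrable N (\<lambda>x. (f x)\<^sup>2)"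

lemma borel_measurable_square_integrable [measurable_dest]:
  "square_integrable N f \<Longrightarrow> f \<in> borel_measurable N"
  by (simp add: square_integrable_def)

lemma integrable_mult_square_integrable:
  assumes "square_integrable N f" "square_integrable N g"
  shows "integrable N (\<lambda>x. f x * g x)"
proof (rule Bochner_Integration.integrable_bound)
  show "integrable N (\<lambda>x. (f x)\<^sup>2 + (g x)\<^sup>2)"
    using assms by (intro Bochner_Integration.integrable_add) (auto simp: square_integrable_def)
  show "AE x in N. norm (f x * g x) \<le> norm ((f x)\<^sup>2 + (g x)\<^sup>2)"
    using abs_mult_le_sum_power2 by (intro AE_I2) simp
qed (use assms in \<open>auto simp: square_integrable_def\<close>)

lemma square_integrable_add:
  assumes f: "square_integrable N f" and g: "square_integrable N g"
  shows "square_integrable N (\<lambda>x. f x + g x)"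
proof -
  have "(\<lambda>x. (f x + g x)\<^sup>2) = (\<lambda>x. (f x)\<^sup>2 + 2 * (f x * g x) + (g x)\<^sup>2)"
    by (simp add: fun_eq_iff power2_eq_square algebra_simps)
  then show ?thesis
    using f g integrable_mult_square_integrable[OF f g]
    by (auto simp: square_integrable_def intro!: Bochner_Integration.integrable_add integrable_mult_right)
qed

lemma square_integrable_cmult: "square_integrable N f \<Longrightarrow> square_integrable N (\<lambda>x. c * f x)"
  by (auto simp: square_integrable_def power_mult_distrib intro!: integrable_mult_right)

lemma square_integrable_diff:
  assumes "square_integrable N f" "square_integrable N g"
  shows "square_integrable N (\<lambda>x. f x - g x)"
  using square_integrable_add[OF assms(1) square_integrable_cmult[OF assms(2), of "-1"]] by simp

lemma square_integrable_sum:
  "finite I \<Longrightarrow> (\<And>i. i \<in> I \<Longrightarrow> square_integrable N (f i)) \<Longrightarrow>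
    square_integrable N (\<lambda>x. \<Sum>i\<in>I. f i x)"
proof (induction I rule: finite_induct)
  case empty
  then show ?case by (simp add: square_integrable_def)
next
  case (insert a I)
  then show ?case by (simp add: square_integrable_add)
qed

lemma integral_power2_nonneg: "0 \<le> (\<integral>x. ((f :: _ \<Rightarrow> real) x)\<^sup>2 \<partial>N)"
  by (rule Bochner_Integration.integral_nonneg) simp

lemma Cauchy_Schwarz_integral:
  assumes f: "square_integrable N f" and g: "square_integrable N g"
  shows "(\<integral>x. f x * g x \<partial>N)\<^sup>2 \<le> (\<integral>x. (f x)\<^sup>2 \<partial>N) * (\<integral>x. (g x)\<^sup>2 \<partial>N)"
proof -
  define A where "A = (\<integral>x. (f x)\<^sup>2 \<partial>N)"
  define B where "B = (\<integral>x. f x * g x \<partial>N)"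
  define C where "C = (\<integral>x. (g x)\<^sup>2 \<partial>N)"
  have quadratic: "0 \<le> A - 2 * l * B + l\<^sup>2 * C" for l
  proof -
    have "(\<lambda>x. (f x - l * g x)\<^sup>2) = (\<lambda>x. (f x)\<^sup>2 - 2 * l * (f x * g x) + l\<^sup>2 * (g x)\<^sup>2)"
      by (simp add: fun_eq_iff power2_eq_square algebra_simps)
    then have "(\<integral>x. (f x - l * g x)\<^sup>2 \<partial>N) = A - 2 * l * B + l\<^sup>2 * C"
      using integrable_mult_square_integrable[OF f g] f g unfolding A_def B_def C_def
      by (simp add: square_integrable_def Bochner_Integration.integral_add Bochner_Integration.integral_diff
          Bochner_Integration.integrable_diff integrable_mult_right)
    then show ?thesis
      using integral_power2_nonneg by metis
  qed
  have "C \<ge> 0"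
    unfolding C_def by (rule integral_power2_nonneg)
  show ?thesis
  proof (cases "C = 0")
    case False
    with \<open>C \<ge> 0\<close> have "C > 0" by simp
    have "0 \<le> A - 2 * (B / C) * B + (B / C)\<^sup>2 * C"
      by (rule quadratic)
    also have "\<dots> = A - B\<^sup>2 / C"
      using \<open>C > 0\<close> by (simp add: field_simps power2_eq_square)
    finally show ?thesis
      using \<open>C > 0\<close> unfolding A_def B_def C_def by (simp add: field_simps)
  next
    case True
    have "B = 0"
    proof (rule ccontr)
      assume "B \<noteq> 0"
      have "0 \<le> A - 2 * ((A + 1) / (2 * B)) * B + ((A + 1) / (2 * B))\<^sup>2 * C"
        by (rule quadratic)
      also have "\<dots> = -1"
        using True \<open>B \<noteq> 0\<close> by (simp add: field_simps)
      finally show False by simp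
    qed
    then show ?thesis
      using True unfolding A_def B_def C_def by simp
  qed
qed

definition hermite_partial_sum :: "(nat \<Rightarrow> real) \<Rightarrow> nat \<Rightarrow> real \<Rightarrow> real" where
  "hermite_partial_sum c N x = (\<Sum>k\<le>N. c k * hermite k x)"

lemma borel_measurable_hermite_partial_sum [measurable]:
  "hermite_partial_sum c N \<in> borel_measurable borel"
  unfolding hermite_partial_sum_def by measurable

lemma square_integrable_hermite: "square_integrable gauss_measure (hermite k)"
  using integrable_gauss_hermite_mult[of k k] by (simp add: square_integrable_def power2_eq_square)

lemma square_integrable_hermite_partial_sum:
  "square_integrable gauss_measure (hermite_partial_sum c N)"
  unfolding hermite_partial_sum_def[abs_def]
  by (intro square_integrable_sum square_integrable_cmult square_integrable_hermite) simp

lemma integral_hermite_partial_sum_mult_hermite: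
  "(\<integral>x. hermite_partial_sum c N x * hermite j x \<partial>gauss_measure) = (if j \<le> N then c j * fact j else 0)"
proof -
  have "(\<integral>x. hermite_partial_sum c N x * hermite j x \<partial>gauss_measure) =
      (\<Sum>k\<le>N. c k * (\<integral>x. hermite k x * hermite j x \<partial>gauss_measure))"
    unfolding hermite_partial_sum_def sum_distrib_right
    by (simp add: Bochner_Integration.integral_sum integrable_gauss_hermite_mult mult.assoc)
  also have "\<dots> = (\<Sum>k\<le>N. if k = j then c j * fact j else 0)"
    by (intro sum.cong refl) (simp add: integral_gauss_hermite_mult)
  finally show ?thesis
    by (simp add: sum.delta')
qed

lemma integral_hermite_partial_sum_power2:
  "(\<integral>x. (hermite_partial_sum c N x)\<^sup>2 \<partial>gauss_measure) = (\<Sum>k\<le>N. (c k)\<^sup>2 * fact k)"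
proof -
  have "(\<integral>x. (hermite_partial_sum c N x)\<^sup>2 \<partial>gauss_measure) =
      (\<integral>x. (\<Sum>k\<le>N. c k * (hermite_partial_sum c N x * hermite k x)) \<partial>gauss_measure)"
    by (rule Bochner_Integration.integral_cong)
      (simp_all add: power2_eq_square hermite_partial_sum_def[of c N] sum_distrib_left sum_distrib_right mult_ac)
  also have "\<dots> = (\<Sum>k\<le>N. c k * (\<integral>x. hermite_partial_sum c N x * hermite k x \<partial>gauss_measure))"
    by (simp add: Bochner_Integration.integral_sum integrable_mult_square_integrable
        square_integrable_hermite_partial_sum square_integrable_hermite)
  also have "\<dots> = (\<Sum>k\<le>N. (c k)\<^sup>2 * fact k)"
    by (intro sum.cong refl) (simp add: integral_hermite_partial_sum_mult_hermite power2_eq_square)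
  finally show ?thesis .
qed

lemma integral_hermite_partial_sum_diff_power2:
  assumes "N \<le> M"
  shows "(\<integral>x. (hermite_partial_sum c M x - hermite_partial_sum c N x)\<^sup>2 \<partial>gauss_measure) =
    (\<Sum>k\<le>M. (c k)\<^sup>2 * fact k) - (\<Sum>k\<le>N. (c k)\<^sup>2 * fact k)"
proof -
  define c' where "c' k = (if k \<le> N then 0 else c k)" for k
  have split: "(\<Sum>k\<le>M. f k) = (\<Sum>k\<le>N. f k) + (\<Sum>k\<le>M. if k \<le> N then 0 else f k)"
    for f :: "nat \<Rightarrow> real"
  proof -
    have "{..M} = {..N} \<union> {N<..M}" "{..N} \<inter> {N<..M} = {}"
      using assms by auto
    then have "(\<Sum>k\<le>M. f k) = (\<Sum>k\<le>N. f k) + (\<Sum>k\<in>{N<..M}. f k)"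
      by (simp add: sum.union_disjoint)
    moreover have "(\<Sum>k\<le>M. if k \<le> N then 0 else f k) = (\<Sum>k\<in>{N<..M}. f k)"
      by (rule sum.mono_neutral_cong_right) auto
    ultimately show ?thesis
      by simp
  qed
  have "hermite_partial_sum c M x - hermite_partial_sum c N x = hermite_partial_sum c' M x" for x
    using split[of "\<lambda>k. c k * hermite k x"] unfolding hermite_partial_sum_def c'_def
    by (simp add: if_distrib[of "\<lambda>a. a * _"] cong: if_cong)
  moreover have "(\<Sum>k\<le>M. (c' k)\<^sup>2 * fact k) = (\<Sum>k\<le>M. if k \<le> N then 0 else (c k)\<^sup>2 * fact k)"
    by (intro sum.cong) (auto simp: c'_def)
  ultimately show ?thesis
    using split[of "\<lambda>k. (c k)\<^sup>2 * fact k"] by (simp add: integral_hermite_partial_sum_power2)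
qed

lemma integral_mult_hermite: "(\<integral>x. F x * hermite k x \<partial>gauss_measure) = hermite_coeff F k * fact k"
  by (simp add: hermite_coeff_def)

context
  fixes F :: "real \<Rightarrow> real"
  assumes F: "square_integrable gauss_measure F"
begin

lemma integral_power2_diff_hermite_partial_sum:
  "(\<integral>x. (F x - hermite_partial_sum (hermite_coeff F) N x)\<^sup>2 \<partial>gauss_measure) =
    (\<integral>x. (F x)\<^sup>2 \<partial>gauss_measure) - (\<Sum>k\<le>N. (hermite_coeff F k)\<^sup>2 * fact k)"
proof -
  let ?h = "hermite_partial_sum (hermite_coeff F) N"
  have "(\<integral>x. F x * ?h x \<partial>gauss_measure) =
      (\<integral>x. (\<Sum>k\<le>N. hermite_coeff F k * (F x * hermite k x)) \<partial>gauss_measure)"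
    by (rule Bochner_Integration.integral_cong) (simp_all add: hermite_partial_sum_def sum_distrib_left mult_ac)
  also have "\<dots> = (\<Sum>k\<le>N. hermite_coeff F k * (\<integral>x. F x * hermite k x \<partial>gauss_measure))"
    by (simp add: Bochner_Integration.integral_sum integrable_mult_square_integrable[OF F square_integrable_hermite])
  also have "\<dots> = (\<Sum>k\<le>N. (hermite_coeff F k)\<^sup>2 * fact k)"
    by (simp add: integral_mult_hermite power2_eq_square mult_ac)
  finally have cross: "(\<integral>x. F x * ?h x \<partial>gauss_measure) = (\<Sum>k\<le>N. (hermite_coeff F k)\<^sup>2 * fact k)" .
  have "(\<lambda>x. (F x - ?h x)\<^sup>2) = (\<lambda>x. (F x)\<^sup>2 - 2 * (F x * ?h x) + (?h x)\<^sup>2)"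
    by (simp add: fun_eq_iff power2_eq_square algebra_simps)
  moreover have "(\<integral>x. (F x)\<^sup>2 - 2 * (F x * ?h x) + (?h x)\<^sup>2 \<partial>gauss_measure) =
      (\<integral>x. (F x)\<^sup>2 \<partial>gauss_measure) - 2 * (\<integral>x. F x * ?h x \<partial>gauss_measure) +
      (\<integral>x. (?h x)\<^sup>2 \<partial>gauss_measure)"
    using F square_integrable_hermite_partial_sum
      integrable_mult_square_integrable[OF F square_integrable_hermite_partial_sum]
    by (simp add: square_integrable_def Bochner_Integration.integral_add Bochner_Integration.integral_diff
        Bochner_Integration.integrable_diff integrable_mult_right)
  ultimately show ?thesis
    by (simp add: cross integral_hermite_partial_sum_power2)
qed

lemma hermite_Bessel_inequality:
  "(\<Sum>k\<le>N. (hermite_coeff F k)\<^sup>2 * fact k) \<le> (\<integral>x. (F x)\<^sup>2 \<partial>gauss_measure)"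
  using integral_power2_diff_hermite_partial_sum[of N]
    integral_power2_nonneg[of gauss_measure "\<lambda>x. F x - hermite_partial_sum (hermite_coeff F) N x"]
  by simp

lemma summable_hermite_coeff_power2: "summable (\<lambda>k. (hermite_coeff F k)\<^sup>2 * fact k)"
proof (rule summableI_nonneg_bounded)
  fix n
  have "(\<Sum>k<n. (hermite_coeff F k)\<^sup>2 * fact k) \<le> (\<Sum>k\<le>n. (hermite_coeff F k)\<^sup>2 * fact k)"
    by (intro sum_mono2) auto
  also have "\<dots> \<le> (\<integral>x. (F x)\<^sup>2 \<partial>gauss_measure)"
    by (rule hermite_Bessel_inequality)
  finally show "(\<Sum>k<n. (hermite_coeff F k)\<^sup>2 * fact k) \<le> (\<integral>x. (F x)\<^sup>2 \<partial>gauss_measure)" .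
qed simp

end

lemma square_integrable_poly: "square_integrable gauss_measure (poly p)"
proof -
  have "poly (p * p) = (\<lambda>x. (poly p x)\<^sup>2)"
    by (simp add: fun_eq_iff poly_mult power2_eq_square)
  then show ?thesis
    using integrable_gauss_poly[of "p * p"] by (simp add: square_integrable_def)
qed

lemma integrable_gauss_exp: "integrable gauss_measure (\<lambda>x. exp (c * x))"
proof -
  have "std_normal_density x * exp (c * x) = exp (c\<^sup>2 / 2) * normal_density c 1 x" for x
  proof -
    have "exp (- x\<^sup>2 / 2) * exp (c * x) = exp (c\<^sup>2 / 2) * exp (- (x - c)\<^sup>2 / 2)"
      by (simp add: exp_add[symmetric] power2_eq_square algebra_simps add_divide_distrib diff_divide_distrib)
    then show ?thesis
      by (simp add: std_normal_density_def normal_density_def)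
  qed
  then show ?thesis
    by (subst integrable_gauss_measure_iff) (auto intro: integrable_mult_right)
qed

lemma integrable_gauss_exp_abs: "integrable gauss_measure (\<lambda>x. exp (c * \<bar>x\<bar>))"
proof (rule Bochner_Integration.integrable_bound)
  show "integrable gauss_measure (\<lambda>x. exp (c * x) + exp (- c * x))"
    by (intro Bochner_Integration.integrable_add integrable_gauss_exp)
  have "exp (c * \<bar>x\<bar>) \<le> exp (c * x) + exp (- c * x)" for x
    by (cases "x \<ge> 0") (simp_all add: add_increasing add_increasing2)
  then show "AE x in gauss_measure. norm (exp (c * \<bar>x\<bar>)) \<le> norm (exp (c * x) + exp (- c * x))"
    by (intro AE_I2) simp
qed simp

lemma sum_exp_series_le_exp:
  assumes "0 \<le> (y::real)"
  shows "(\<Sum>n<N. y ^ n / fact n) \<le> exp y"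
proof -
  have "(\<lambda>n. y ^ n / fact n) sums exp y"
    using exp_converges[of y] by (simp add: divide_inverse mult.commute)
  then show ?thesis
    using sum_le_suminf[of "\<lambda>n. y ^ n / fact n" "{..<N}"] assms by (auto simp: sums_iff)
qed

context
  fixes G :: "real \<Rightarrow> real"
  assumes G: "square_integrable gauss_measure G"
    and orthogonal: "\<And>k. (\<integral>x. G x * hermite k x \<partial>gauss_measure) = 0"
begin

lemma integral_orthogonal_mult_power: "(\<integral>x. G x * x ^ n \<partial>gauss_measure) = 0"
proof -
  have "(\<integral>x. G x * (x ^ n * hermite j x) \<partial>gauss_measure) = 0" for j
  proof (induction n arbitrary: j)
    case 0
    then show ?case
      using orthogonal[of j] by simp
  next
    case (Suc n)
    have int: "integrable gauss_measure (\<lambda>x. G x * (x ^ n * hermite j x))" for j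
      using integrable_mult_square_integrable[OF G square_integrable_poly[of "monom 1 n * hermite_poly j"]]
      by (simp add: poly_monom poly_hermite_poly)
    have "G x * (x ^ Suc n * hermite j x) = G x * (x ^ n * (x * hermite j x))" for x
      by simp
    also have "G x * (x ^ n * (x * hermite j x)) =
        G x * (x ^ n * hermite (Suc j) x) + real j * (G x * (x ^ n * hermite (j - 1) x))" for x
      unfolding mult_hermite by (simp add: algebra_simps)
    finally have "G x * (x ^ Suc n * hermite j x) =
        G x * (x ^ n * hermite (Suc j) x) + real j * (G x * (x ^ n * hermite (j - 1) x))" for x .
    then show ?case
      using Suc int by (simp add: Bochner_Integration.integral_add integrable_mult_right)
  qed
  from this[of 0] show ?thesis
    by simp
qed

text \<open>
  The power series of \<open>e\<^sup>i\<^sup>u\<^sup>x\<close> may be integrated termwise against \<open>G\<close>, dominated by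
  \<open>G\<^sup>2 + e\<^sup>2\<^sup>|\<^sup>u\<^sup>x\<^sup>|\<close>; every term vanishes.
\<close>

lemma fourier_transform_orthogonal: "(\<integral>x. G x *\<^sub>R iexp (u * x) \<partial>gauss_measure) = 0"
proof -
  define s where "s N x = (\<Sum>n<N. complex_of_real (G x * x ^ n) *
      ((\<i> * complex_of_real u) ^ n / of_real (fact n)))" for N x
  have [measurable]: "G \<in> borel_measurable borel"
    using G by (simp add: square_integrable_def)
  have int_power: "integrable gauss_measure (\<lambda>x. G x * x ^ n)" for n
    using integrable_mult_square_integrable[OF G square_integrable_poly[of "monom 1 n"]]
    by (simp add: poly_monom)
  have "integral\<^sup>L gauss_measure (s N) =
      (\<Sum>n<N. complex_of_real (\<integral>x. G x * x ^ n \<partial>gauss_measure) * ((\<i> * complex_of_real u) ^ n / of_real (fact n)))"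
    for N unfolding s_def
    by (subst Bochner_Integration.integral_sum) (auto intro!: int_power integrable_divide integrable_mult_left integrable_of_real
        simp del: of_real_mult of_real_power)
  moreover note integral_orthogonal_mult_power
  moreover have "(\<lambda>N. integral\<^sup>L gauss_measure (s N)) \<longlonglongrightarrow> (\<integral>x. G x *\<^sub>R iexp (u * x) \<partial>gauss_measure)"
  proof (rule integral_dominated_convergence[where w = "\<lambda>x. (G x)\<^sup>2 + exp (2 * \<bar>u\<bar> * \<bar>x\<bar>)"])
    show "integrable gauss_measure (\<lambda>x. (G x)\<^sup>2 + exp (2 * \<bar>u\<bar> * \<bar>x\<bar>))"
      using G by (intro Bochner_Integration.integrable_add integrable_gauss_exp_abs)
        (simp add: square_integrable_def)
    show "AE x in gauss_measure. (\<lambda>N. s N x) \<longlonglongrightarrow> G x *\<^sub>R iexp (u * x)"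
    proof (intro AE_I2)
      fix x
      have "(\<lambda>n. complex_of_real (G x) * ((\<i> * complex_of_real (u * x)) ^ n /\<^sub>R fact n)) sums
          (complex_of_real (G x) * iexp (u * x))"
        by (intro sums_mult exp_converges)
      moreover have "(\<lambda>n. complex_of_real (G x) * ((\<i> * complex_of_real (u * x)) ^ n /\<^sub>R fact n)) =
          (\<lambda>n. complex_of_real (G x * x ^ n) * ((\<i> * complex_of_real u) ^ n / of_real (fact n)))"
        by (simp add: fun_eq_iff scaleR_conv_of_real power_mult_distrib field_simps)
      ultimately show "(\<lambda>N. s N x) \<longlonglongrightarrow> G x *\<^sub>R iexp (u * x)"
        unfolding s_def sums_def scaleR_conv_of_real by metis
    qed
    show "AE x in gauss_measure. norm (s N x) \<le> (G x)\<^sup>2 + exp (2 * \<bar>u\<bar> * \<bar>x\<bar>)" for N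
    proof (intro AE_I2)
      fix x
      have "norm (s N x) \<le> (\<Sum>n<N. norm (complex_of_real (G x * x ^ n) *
          ((\<i> * complex_of_real u) ^ n / of_real (fact n))))"
        unfolding s_def by (rule norm_sum)
      also have "\<dots> = \<bar>G x\<bar> * (\<Sum>n<N. \<bar>u * x\<bar> ^ n / fact n)"
        by (simp add: sum_distrib_left norm_mult norm_power norm_divide abs_mult power_mult_distrib mult_ac)
      also have "\<dots> \<le> \<bar>G x\<bar> * exp \<bar>u * x\<bar>"
        by (intro mult_left_mono sum_exp_series_le_exp) auto
      also have "\<dots> \<le> (G x)\<^sup>2 + (exp (\<bar>u\<bar> * \<bar>x\<bar>))\<^sup>2"
        using abs_mult_le_sum_power2[of "G x" "exp (\<bar>u\<bar> * \<bar>x\<bar>)"] by (simp add: abs_mult)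
      also have "(exp (\<bar>u\<bar> * \<bar>x\<bar>))\<^sup>2 = exp (2 * \<bar>u\<bar> * \<bar>x\<bar>)"
        by (simp add: power2_eq_square exp_add[symmetric])
      finally show "norm (s N x) \<le> (G x)\<^sup>2 + exp (2 * \<bar>u\<bar> * \<bar>x\<bar>)" .
    qed
    show "(\<lambda>x. G x *\<^sub>R iexp (u * x)) \<in> borel_measurable gauss_measure"
      by (simp only: measurable_gauss_measure) measurable
    show "s N \<in> borel_measurable gauss_measure" for N
      unfolding s_def by (simp only: measurable_gauss_measure) measurable
  qed
  ultimately show ?thesis
    by (simp add: LIMSEQ_const_iff)
qed

end

lemma real_distribution_density_normalized:
  assumes sets_N: "sets N = sets borel"
    and [measurable]: "g \<in> borel_measurable borel"
    and nonneg: "\<And>x. 0 \<le> g x" and int: "integrable N g" and m: "(\<integral>x. g x \<partial>N) = m" "m > 0"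
  shows "real_distribution (density N (\<lambda>x. ennreal (g x / m)))"
proof -
  have [simp]: "measurable N = measurable borel"
    by (intro ext measurable_cong_sets) (simp_all add: sets_N)
  have "emeasure (density N (\<lambda>x. ennreal (g x / m))) (space N) = (\<integral>\<^sup>+ x. ennreal (g x / m) \<partial>N)"
    by (subst emeasure_density) auto
  also have "\<dots> = ennreal (\<integral>x. g x / m \<partial>N)"
    by (rule nn_integral_eq_integral) (use int nonneg m in auto)
  also have "(\<integral>x. g x / m \<partial>N) = 1"
    using m by simp
  finally have "prob_space (density N (\<lambda>x. ennreal (g x / m)))"
    by (intro prob_spaceI) simp
  then show ?thesis
    by (simp add: real_distribution_def real_distribution_axioms_def sets_N)
qed

lemma integrable_scaleR_iexp:
  fixes g :: "real \<Rightarrow> real"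
  assumes sets_N: "sets N = sets borel" and int: "integrable N g"
  shows "integrable N (\<lambda>x. g x *\<^sub>R iexp (u * x))"
proof (rule Bochner_Integration.integrable_bound[OF int])
  have measurable_N: "measurable N = measurable borel"
    by (intro ext measurable_cong_sets) (simp_all add: sets_N)
  have [measurable]: "g \<in> borel_measurable borel"
    using borel_measurable_integrable[OF int] unfolding measurable_N .
  show "(\<lambda>x. g x *\<^sub>R iexp (u * x)) \<in> borel_measurable N"
    unfolding measurable_N by measurable
  show "AE x in N. norm (g x *\<^sub>R iexp (u * x)) \<le> norm (g x)"
    by (intro AE_I2) (simp add: norm_mult)
qed

text \<open>Levy's uniqueness theorem, applied to the normalized densities \<open>f / m\<close> and \<open>g / m\<close>.\<close>

lemma AE_eq_if_fourier_transform_eq: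
  fixes f g :: "real \<Rightarrow> real"
  assumes N: "sigma_finite_measure N" and sets_N: "sets N = sets borel"
    and measurable_f [measurable]: "f \<in> borel_measurable borel"
    and measurable_g [measurable]: "g \<in> borel_measurable borel"
    and nonneg: "\<And>x. 0 \<le> f x" "\<And>x. 0 \<le> g x" and int: "integrable N f" "integrable N g"
    and mass: "(\<integral>x. f x \<partial>N) = m" "(\<integral>x. g x \<partial>N) = m" "m > 0"
    and fourier: "\<And>u. (\<integral>x. f x *\<^sub>R iexp (u * x) \<partial>N) = (\<integral>x. g x *\<^sub>R iexp (u * x) \<partial>N)"
  shows "AE x in N. f x = g x"
proof -
  have [simp]: "measurable N = measurable borel"
    by (intro ext measurable_cong_sets) (simp_all add: sets_N)
  have char_density: "char (density N (\<lambda>x. ennreal (h x / m))) u =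
      (1 / m) *\<^sub>R (\<integral>x. h x *\<^sub>R iexp (u * x) \<partial>N)"
    if [measurable]: "h \<in> borel_measurable borel" and "\<And>x. 0 \<le> h x" for h u
  proof -
    have "char (density N (\<lambda>x. ennreal (h x / m))) u = (\<integral>x. (h x / m) *\<^sub>R iexp (u * x) \<partial>N)"
      unfolding char_def by (subst integral_density) (use that mass(3) in auto)
    also have "\<dots> = (\<integral>x. (1 / m) *\<^sub>R (h x *\<^sub>R iexp (u * x)) \<partial>N)"
      by (rule Bochner_Integration.integral_cong) simp_all
    finally show ?thesis
      by (simp only: Bochner_Integration.integral_scaleR_right)
  qed
  have "density N (\<lambda>x. ennreal (f x / m)) = density N (\<lambda>x. ennreal (g x / m))"
  proof (rule Levy_uniqueness)
    show "real_distribution (density N (\<lambda>x. ennreal (f x / m)))"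
      by (rule real_distribution_density_normalized[OF sets_N]) (simp_all add: nonneg int mass)
    show "real_distribution (density N (\<lambda>x. ennreal (g x / m)))"
      by (rule real_distribution_density_normalized[OF sets_N]) (simp_all add: nonneg int mass)
    show "char (density N (\<lambda>x. ennreal (f x / m))) = char (density N (\<lambda>x. ennreal (g x / m)))"
      unfolding char_density[OF measurable_f nonneg(1)] char_density[OF measurable_g nonneg(2)] fourier ..
  qed
  then have "AE x in N. ennreal (f x / m) = ennreal (g x / m)"
    by (subst (asm) sigma_finite_measure.density_unique_iff[OF N]) simp_all
  then show ?thesis
    by eventually_elim (use nonneg mass(3) in \<open>simp add: ennreal_inj\<close>)
qed

lemma fourier_transform_zero_imp_AE_zero:
  assumes N: "sigma_finite_measure N" and sets_N: "sets N = sets borel"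
    and int: "integrable N G"
    and fourier: "\<And>u. (\<integral>x. G x *\<^sub>R iexp (u * x) \<partial>N) = 0"
  shows "AE x in N. G x = 0"
proof -
  have [simp]: "measurable N = measurable borel"
    by (intro ext measurable_cong_sets) (simp_all add: sets_N)
  have [measurable]: "G \<in> borel_measurable borel"
    using borel_measurable_integrable[OF int] by simp
  define gp where "gp x = max (G x) 0" for x
  define gn where "gn x = max (- G x) 0" for x
  have [measurable]: "gp \<in> borel_measurable borel"
    unfolding gp_def by measurable
  have [measurable]: "gn \<in> borel_measurable borel"
    unfolding gn_def by measurable
  have G_split: "G x = gp x - gn x" for x
    by (simp add: gp_def gn_def max_def)
  have nonneg: "0 \<le> gp x" "0 \<le> gn x" for x
    by (simp_all add: gp_def gn_def)
  have int_gp: "integrable N gp"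
    by (rule Bochner_Integration.integrable_bound[OF int]) (auto simp: gp_def)
  have int_gn: "integrable N gn"
    by (rule Bochner_Integration.integrable_bound[OF int]) (auto simp: gn_def)
  have same_fourier: "(\<integral>x. gp x *\<^sub>R iexp (u * x) \<partial>N) = (\<integral>x. gn x *\<^sub>R iexp (u * x) \<partial>N)" for u
  proof -
    have "(\<integral>x. gp x *\<^sub>R iexp (u * x) \<partial>N) - (\<integral>x. gn x *\<^sub>R iexp (u * x) \<partial>N) =
        (\<integral>x. gp x *\<^sub>R iexp (u * x) - gn x *\<^sub>R iexp (u * x) \<partial>N)"
      by (rule Bochner_Integration.integral_diff[symmetric])
        (rule integrable_scaleR_iexp[OF sets_N]; fact)+
    also have "\<dots> = (\<integral>x. G x *\<^sub>R iexp (u * x) \<partial>N)"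
      by (rule Bochner_Integration.integral_cong) (simp_all add: G_split scaleR_diff_left)
    finally have "(\<integral>x. gp x *\<^sub>R iexp (u * x) \<partial>N) - (\<integral>x. gn x *\<^sub>R iexp (u * x) \<partial>N) = 0"
      by (simp only: fourier)
    then show ?thesis
      by (simp add: fourier)
  qed
  have same_mass: "(\<integral>x. gp x \<partial>N) = (\<integral>x. gn x \<partial>N)"
    using same_fourier[of 0] by (simp add: scaleR_conv_of_real)
  define m where "m = (\<integral>x. gp x \<partial>N)"
  have "m \<ge> 0"
    unfolding m_def by (rule Bochner_Integration.integral_nonneg) (simp add: nonneg)
  then consider "m = 0" | "m > 0"
    by linarith
  then have "AE x in N. gp x = gn x"
  proof cases
    case 1
    have "AE x in N. gp x = 0" "AE x in N. gn x = 0"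
      using 1 same_mass integral_nonneg_eq_0_iff_AE[OF int_gp] integral_nonneg_eq_0_iff_AE[OF int_gn]
        nonneg unfolding m_def by simp_all
    then show ?thesis
      by eventually_elim simp
  next
    case 2
    then show ?thesis
      using same_mass same_fourier
      by (intro AE_eq_if_fourier_transform_eq[OF N sets_N, where m = m]) (simp_all add: nonneg int_gp int_gn m_def)
  qed
  then show ?thesis
    by eventually_elim (simp add: G_split)
qed

theorem hermite_complete:
  assumes "square_integrable gauss_measure G"
    and "\<And>k. (\<integral>x. G x * hermite k x \<partial>gauss_measure) = 0"
  shows "AE x in gauss_measure. G x = 0"
proof (rule fourier_transform_zero_imp_AE_zero)
  show "sigma_finite_measure gauss_measure"
    using prob_space_gauss_measure by (simp add: prob_space_imp_sigma_finite)
  show "integrable gauss_measure G"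
    using integrable_mult_square_integrable[OF assms(1) square_integrable_hermite[of 0]] by simp
qed (use fourier_transform_orthogonal[OF assms] in simp_all)

lemma LIMSEQ_obtain_geometric_rate:
  fixes f :: "nat \<Rightarrow> real"
  assumes "f \<longlonglongrightarrow> L"
  obtains n where "mono n" "\<And>j. j \<le> n j" "\<And>j N. n j \<le> N \<Longrightarrow> \<bar>f N - L\<bar> \<le> (1/4) ^ j"
proof -
  have "\<forall>j. \<exists>N0. \<forall>N\<ge>N0. \<bar>f N - L\<bar> \<le> (1/4) ^ j"
  proof
    fix j
    have "(0::real) < (1/4) ^ j"
      by simp
    then obtain N0 where "\<forall>N\<ge>N0. norm (f N - L) < (1/4) ^ j"
      using assms unfolding LIMSEQ_iff by blast
    then show "\<exists>N0. \<forall>N\<ge>N0. \<bar>f N - L\<bar> \<le> (1/4) ^ j"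
      by (auto intro: less_imp_le)
  qed
  then obtain N0 where N0: "\<And>j N. N0 j \<le> N \<Longrightarrow> \<bar>f N - L\<bar> \<le> (1/4) ^ j"
    by (metis choice)
  define n where "n j = (\<Sum>i\<le>j. N0 i) + j" for j
  show ?thesis
  proof
    show "mono n"
      unfolding n_def by (intro monoI add_mono sum_mono2) auto
    show "j \<le> n j" for j
      by (simp add: n_def)
    show "\<bar>f N - L\<bar> \<le> (1/4) ^ j" if "n j \<le> N" for j N
    proof (rule N0)
      have "N0 j \<le> (\<Sum>i\<le>j. N0 i)"
        by (rule member_le_sum) auto
      then show "N0 j \<le> N"
        using that by (simp add: n_def)
    qed
  qed
qed

lemma abs_le_power_half_plus_square: "\<bar>e::real\<bar> \<le> (1/2) ^ j + 2 ^ j * e\<^sup>2"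
proof (cases "\<bar>e\<bar> \<le> (1/2) ^ j")
  case False
  then have "1 < 2 ^ j * \<bar>e\<bar>"
    by (simp add: power_one_over field_simps)
  then have "\<bar>e\<bar> \<le> 2 ^ j * \<bar>e\<bar> * \<bar>e\<bar>"
    by (simp add: mult_le_cancel_right1)
  then show ?thesis
    by (simp add: power2_eq_square abs_mult_self_eq mult.assoc add_increasing)
qed (simp add: add_increasing2)

text \<open>
  \<open>\<Sum>\<^sub>j 2\<^sup>j (h\<^sub>j\<^sub>+\<^sub>1 - h\<^sub>j)\<^sup>2\<close> has finite integral, hence is finite a.e., and there the increments
  are absolutely summable.
\<close>

lemma AE_convergent_of_L2_increments:
  fixes h :: "nat \<Rightarrow> 'a \<Rightarrow> real"
  assumes [measurable]: "\<And>j. h j \<in> borel_measurable N"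
    and int: "\<And>j. integrable N (\<lambda>x. (h (Suc j) x - h j x)\<^sup>2)"
    and small: "\<And>j. (\<integral>x. (h (Suc j) x - h j x)\<^sup>2 \<partial>N) \<le> (1/4) ^ j"
  shows "AE x in N. convergent (\<lambda>j. h j x)"
proof -
  define e where "e j x = h (Suc j) x - h j x" for j x
  have [measurable]: "e j \<in> borel_measurable N" for j
    unfolding e_def by measurable
  define q where "q x = (\<Sum>j. ennreal (2 ^ j * (e j x)\<^sup>2))" for x
  have "(\<integral>\<^sup>+x. q x \<partial>N) = (\<Sum>j. \<integral>\<^sup>+x. ennreal (2 ^ j * (e j x)\<^sup>2) \<partial>N)"
    unfolding q_def by (rule nn_integral_suminf) measurable
  also have "\<dots> \<le> (\<Sum>j. ennreal ((1/2) ^ j))"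
  proof (rule suminf_le[OF _ summableI summableI])
    fix j
    have "(\<integral>\<^sup>+x. ennreal (2 ^ j * (e j x)\<^sup>2) \<partial>N) = ennreal (\<integral>x. 2 ^ j * (e j x)\<^sup>2 \<partial>N)"
      by (rule nn_integral_eq_integral) (use int in \<open>auto simp: e_def\<close>)
    also have "(\<integral>x. 2 ^ j * (e j x)\<^sup>2 \<partial>N) \<le> 2 ^ j * (1/4) ^ j"
      using small[of j] by (simp add: e_def)
    also have "(2::real) ^ j * (1/4) ^ j = (1/2) ^ j"
      by (simp add: power_mult_distrib[symmetric])
    finally show "(\<integral>\<^sup>+x. ennreal (2 ^ j * (e j x)\<^sup>2) \<partial>N) \<le> ennreal ((1/2) ^ j)"
      by (simp add: ennreal_leI)
  qed
  also have "\<dots> = ennreal (\<Sum>j. (1/2) ^ j)"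
    by (rule suminf_ennreal2) (auto simp: summable_geometric)
  finally have "(\<integral>\<^sup>+x. q x \<partial>N) \<noteq> \<infinity>"
    by (auto simp: top_unique)
  moreover have "q \<in> borel_measurable N"
    unfolding q_def by measurable
  ultimately have "AE x in N. q x \<noteq> \<infinity>"
    by (intro nn_integral_PInf_AE)
  then show ?thesis
  proof eventually_elim
    case (elim x)
    have "summable (\<lambda>j. 2 ^ j * (e j x)\<^sup>2)"
      using elim by (intro summable_suminf_not_top) (simp_all add: q_def top_unique)
    then have "summable (\<lambda>j. (1/2) ^ j + 2 ^ j * (e j x)\<^sup>2)"
      by (intro summable_add summable_geometric) auto
    then have "summable (\<lambda>j. \<bar>e j x\<bar>)"
      by (rule summable_comparison_test[rotated]) (auto intro: abs_le_power_half_plus_square)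
    then have "summable (\<lambda>j. e j x)"
      by (rule summable_rabs_cancel)
    then have "(\<lambda>J. (\<Sum>j<J. e j x) + h 0 x) \<longlonglongrightarrow> suminf (\<lambda>j. e j x) + h 0 x"
      by (intro tendsto_add summable_LIMSEQ tendsto_const)
    moreover have "(\<Sum>j<J. e j x) + h 0 x = h J x" for J
      unfolding e_def sum_lessThan_telescope[of "\<lambda>j. h j x"] by simp
    ultimately show ?case
      unfolding convergent_def by auto
  qed
qed

text \<open>Fatou's lemma for \<open>L\<^sup>2\<close> distances to a fixed function.\<close>

lemma
  fixes h :: "nat \<Rightarrow> 'a \<Rightarrow> real"
  assumes [measurable]: "\<And>l. h l \<in> borel_measurable N" "G \<in> borel_measurable N" "f \<in> borel_measurable N"
    and lim: "AE x in N. (\<lambda>l. h l x) \<longlonglongrightarrow> G x"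
    and int: "\<And>l. integrable N (\<lambda>x. (h l x - f x)\<^sup>2)"
    and bound: "eventually (\<lambda>l. (\<integral>x. (h l x - f x)\<^sup>2 \<partial>N) \<le> B) sequentially"
  shows integrable_power2_diff_AE_limit: "integrable N (\<lambda>x. (G x - f x)\<^sup>2)"
    and integral_power2_diff_AE_limit_le: "(\<integral>x. (G x - f x)\<^sup>2 \<partial>N) \<le> B"
proof -
  obtain L where "\<forall>l\<ge>L. (\<integral>x. (h l x - f x)\<^sup>2 \<partial>N) \<le> B"
    using bound unfolding eventually_sequentially by blast
  then have "(\<integral>x. (h L x - f x)\<^sup>2 \<partial>N) \<le> B"
    by simp
  then have "B \<ge> 0"
    using integral_power2_nonneg[of N "\<lambda>x. h L x - f x"] by linarith
  have "(\<integral>\<^sup>+x. ennreal ((G x - f x)\<^sup>2) \<partial>N) = (\<integral>\<^sup>+x. liminf (\<lambda>l. ennreal ((h l x - f x)\<^sup>2)) \<partial>N)"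
  proof (rule nn_integral_cong_AE)
    show "AE x in N. ennreal ((G x - f x)\<^sup>2) = liminf (\<lambda>l. ennreal ((h l x - f x)\<^sup>2))"
      using lim
    proof eventually_elim
      case (elim x)
      then have "(\<lambda>l. ennreal ((h l x - f x)\<^sup>2)) \<longlonglongrightarrow> ennreal ((G x - f x)\<^sup>2)"
        by (intro tendsto_ennrealI tendsto_intros)
      then show ?case
        by (intro lim_imp_Liminf[symmetric]) simp_all
    qed
  qed
  also have "\<dots> \<le> liminf (\<lambda>l. \<integral>\<^sup>+x. ennreal ((h l x - f x)\<^sup>2) \<partial>N)"
    by (rule nn_integral_liminf) measurable
  also have "\<dots> \<le> limsup (\<lambda>l. \<integral>\<^sup>+x. ennreal ((h l x - f x)\<^sup>2) \<partial>N)"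
    by (rule Liminf_le_Limsup) simp
  also have "\<dots> \<le> ennreal B"
  proof (rule Limsup_bounded)
    show "\<forall>\<^sub>F l in sequentially. (\<integral>\<^sup>+x. ennreal ((h l x - f x)\<^sup>2) \<partial>N) \<le> ennreal B"
      using bound
    proof eventually_elim
      case (elim l)
      have "(\<integral>\<^sup>+x. ennreal ((h l x - f x)\<^sup>2) \<partial>N) = ennreal (\<integral>x. (h l x - f x)\<^sup>2 \<partial>N)"
        by (rule nn_integral_eq_integral) (simp_all add: int)
      with elim show ?case
        by (simp add: ennreal_leI)
    qed
  qed
  finally have nn_le: "(\<integral>\<^sup>+x. ennreal ((G x - f x)\<^sup>2) \<partial>N) \<le> ennreal B" .
  show int_G: "integrable N (\<lambda>x. (G x - f x)\<^sup>2)"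
  proof (rule integrableI_nonneg)
    show "(\<integral>\<^sup>+x. ennreal ((G x - f x)\<^sup>2) \<partial>N) < \<infinity>"
      using nn_le by (simp add: order_le_less_trans)
  qed simp_all
  have "ennreal (\<integral>x. (G x - f x)\<^sup>2 \<partial>N) = (\<integral>\<^sup>+x. ennreal ((G x - f x)\<^sup>2) \<partial>N)"
    by (rule nn_integral_eq_integral[symmetric]) (simp_all add: int_G)
  with nn_le have "ennreal (\<integral>x. (G x - f x)\<^sup>2 \<partial>N) \<le> ennreal B"
    by simp
  then show "(\<integral>x. (G x - f x)\<^sup>2 \<partial>N) \<le> B"
    using \<open>B \<ge> 0\<close> by (subst (asm) ennreal_le_iff) auto
qed

lemma hermite_partial_sums_AE_convergent_subseq:
  fixes c :: "nat \<Rightarrow> real"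
  assumes summable: "summable (\<lambda>k. (c k)\<^sup>2 * fact k)"
  obtains n where "\<And>j. j \<le> n j" and "AE x in gauss_measure. convergent (\<lambda>j. hermite_partial_sum c (n j) x)"
proof -
  define P where "P N = (\<Sum>k\<le>N. (c k)\<^sup>2 * fact k)" for N
  define S where "S = (\<Sum>k. (c k)\<^sup>2 * fact k)"
  have "P \<longlonglongrightarrow> S"
    unfolding P_def[abs_def] S_def by (rule summable_LIMSEQ'[OF summable])
  then obtain n where "mono n" and n_ge: "\<And>j. j \<le> n j"
    and n_rate: "\<And>j N. n j \<le> N \<Longrightarrow> \<bar>P N - S\<bar> \<le> (1/4) ^ j"
    using LIMSEQ_obtain_geometric_rate by blast
  have "AE x in gauss_measure. convergent (\<lambda>j. hermite_partial_sum c (n j) x)"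
  proof (rule AE_convergent_of_L2_increments)
    fix j
    have "n j \<le> n (Suc j)"
      using \<open>mono n\<close> by (simp add: monoD)
    then have "(\<integral>x. (hermite_partial_sum c (n (Suc j)) x - hermite_partial_sum c (n j) x)\<^sup>2 \<partial>gauss_measure) =
        P (n (Suc j)) - P (n j)"
      unfolding P_def by (rule integral_hermite_partial_sum_diff_power2)
    also have "\<dots> \<le> (1/4) ^ j"
      using n_rate[of j "n j"] sum_le_suminf[OF summable, of "{..n (Suc j)}"] by (simp add: P_def S_def)
    finally show "(\<integral>x. (hermite_partial_sum c (n (Suc j)) x - hermite_partial_sum c (n j) x)\<^sup>2 \<partial>gauss_measure)
        \<le> (1/4) ^ j" .
    show "integrable gauss_measure (\<lambda>x. (hermite_partial_sum c (n (Suc j)) x - hermite_partial_sum c (n j) x)\<^sup>2)"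
      using square_integrable_diff[OF square_integrable_hermite_partial_sum square_integrable_hermite_partial_sum]
      by (simp add: square_integrable_def)
  qed simp
  with n_ge show ?thesis
    by (rule that)
qed

lemma hermite_series_L2_limit:
  fixes c :: "nat \<Rightarrow> real"
  assumes summable: "summable (\<lambda>k. (c k)\<^sup>2 * fact k)"
  obtains G where "square_integrable gauss_measure G"
    and "\<And>N. (\<integral>x. (G x - hermite_partial_sum c N x)\<^sup>2 \<partial>gauss_measure) \<le>
      (\<Sum>k. (c k)\<^sup>2 * fact k) - (\<Sum>k\<le>N. (c k)\<^sup>2 * fact k)"
proof -
  define tail where "tail N = (\<Sum>k. (c k)\<^sup>2 * fact k) - (\<Sum>k\<le>N. (c k)\<^sup>2 * fact k)" for N
  obtain n where n_ge: "\<And>j. j \<le> n j"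
    and conv: "AE x in gauss_measure. convergent (\<lambda>j. hermite_partial_sum c (n j) x)"
    using hermite_partial_sums_AE_convergent_subseq[OF summable] by blast
  define h where "h j = hermite_partial_sum c (n j)" for j
  define G where "G x = lim (\<lambda>j. h j x)" for x
  have [measurable]: "G \<in> borel_measurable borel"
    unfolding G_def h_def by measurable
  have lim: "AE x in gauss_measure. (\<lambda>j. h j x) \<longlonglongrightarrow> G x"
    using conv by (simp add: G_def h_def convergent_LIMSEQ_iff)
  have int_diff: "integrable gauss_measure (\<lambda>x. (h l x - hermite_partial_sum c N x)\<^sup>2)" for l N
    using square_integrable_diff[OF square_integrable_hermite_partial_sum square_integrable_hermite_partial_sum]
    by (simp add: square_integrable_def h_def)
  have eventually_le: "eventually (\<lambda>l. (\<integral>x. (h l x - hermite_partial_sum c N x)\<^sup>2 \<partial>gauss_measure) \<le> tail N)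
      sequentially" for N
    unfolding eventually_sequentially
  proof (intro exI allI impI)
    fix l
    assume "N \<le> l"
    then have "N \<le> n l"
      using n_ge[of l] by simp
    then show "(\<integral>x. (h l x - hermite_partial_sum c N x)\<^sup>2 \<partial>gauss_measure) \<le> tail N"
      using sum_le_suminf[OF summable, of "{..n l}"]
      by (simp add: h_def tail_def integral_hermite_partial_sum_diff_power2)
  qed
  have bound: "(\<integral>x. (G x - hermite_partial_sum c N x)\<^sup>2 \<partial>gauss_measure) \<le> tail N"
    and int: "integrable gauss_measure (\<lambda>x. (G x - hermite_partial_sum c N x)\<^sup>2)" for N
    using integral_power2_diff_AE_limit_le[OF _ _ _ lim int_diff eventually_le]
      integrable_power2_diff_AE_limit[OF _ _ _ lim int_diff eventually_le]
    by (simp_all add: h_def)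
  show ?thesis
  proof
    have "square_integrable gauss_measure (\<lambda>x. (G x - hermite_partial_sum c 0 x) + hermite_partial_sum c 0 x)"
      using int[of 0] by (intro square_integrable_add square_integrable_hermite_partial_sum)
        (simp add: square_integrable_def)
    then show "square_integrable gauss_measure G"
      by simp
  qed (use bound tail_def in simp)
qed

text \<open>
  The \<open>L\<^sup>2\<close> limit of the Hermite series of \<open>F\<close> has the same Hermite coefficients as \<open>F\<close>,
  so it equals \<open>F\<close> by completeness.
\<close>

theorem hermite_expansion_L2_convergence:
  assumes F: "square_integrable gauss_measure F"
  shows "(\<lambda>N. \<integral>x. (F x - hermite_partial_sum (hermite_coeff F) N x)\<^sup>2 \<partial>gauss_measure) \<longlonglongrightarrow> 0"
proof -
  let ?c = "hermite_coeff F" and ?h = "hermite_partial_sum (hermite_coeff F)"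
  define tail where "tail N = (\<Sum>k. (?c k)\<^sup>2 * fact k) - (\<Sum>k\<le>N. (?c k)\<^sup>2 * fact k)" for N
  have "tail \<longlonglongrightarrow> (\<Sum>k. (?c k)\<^sup>2 * fact k) - (\<Sum>k. (?c k)\<^sup>2 * fact k)"
    unfolding tail_def by (intro tendsto_diff tendsto_const summable_LIMSEQ' summable_hermite_coeff_power2 F)
  then have tail_lim: "tail \<longlonglongrightarrow> 0"
    by simp
  obtain G where G: "square_integrable gauss_measure G"
    and G_close: "\<And>N. (\<integral>x. (G x - ?h N x)\<^sup>2 \<partial>gauss_measure) \<le> tail N"
    using hermite_series_L2_limit[OF summable_hermite_coeff_power2[OF F]] unfolding tail_def by blast
  have orthogonal: "(\<integral>x. (F x - G x) * hermite k x \<partial>gauss_measure) = 0" for k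
  proof -
    define a where "a = (\<integral>x. (F x - G x) * hermite k x \<partial>gauss_measure)"
    have "a\<^sup>2 \<le> tail N * fact k" if "k \<le> N" for N
    proof -
      have "(\<integral>x. (F x - ?h N x) * hermite k x \<partial>gauss_measure) = 0"
        using that integrable_mult_square_integrable[OF F square_integrable_hermite]
          integrable_mult_square_integrable[OF square_integrable_hermite_partial_sum square_integrable_hermite]
        by (simp add: left_diff_distrib integral_mult_hermite[of F] integral_hermite_partial_sum_mult_hermite)
      moreover have "(\<integral>x. (F x - G x) * hermite k x \<partial>gauss_measure) =
          (\<integral>x. (F x - ?h N x) * hermite k x + (?h N x - G x) * hermite k x \<partial>gauss_measure)"
        by (rule Bochner_Integration.integral_cong) (simp_all add: algebra_simps)
      moreover have "(\<integral>x. (F x - ?h N x) * hermite k x + (?h N x - G x) * hermite k x \<partial>gauss_measure) =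
          (\<integral>x. (F x - ?h N x) * hermite k x \<partial>gauss_measure) + (\<integral>x. (?h N x - G x) * hermite k x \<partial>gauss_measure)"
        using square_integrable_hermite_partial_sum square_integrable_hermite
        by (intro Bochner_Integration.integral_add integrable_mult_square_integrable square_integrable_diff F G)
      ultimately have "a\<^sup>2 = (\<integral>x. (?h N x - G x) * hermite k x \<partial>gauss_measure)\<^sup>2"
        by (simp add: a_def)
      also have "\<dots> \<le> (\<integral>x. (?h N x - G x)\<^sup>2 \<partial>gauss_measure) * (\<integral>x. (hermite k x)\<^sup>2 \<partial>gauss_measure)"
        by (intro Cauchy_Schwarz_integral square_integrable_diff square_integrable_hermite_partial_sum
            G square_integrable_hermite)
      also have "\<dots> \<le> tail N * fact k"
        using G_close[of N] integral_gauss_hermite_mult[of k k]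
        by (simp add: power2_commute power2_eq_square[of "hermite k _"])
      finally show ?thesis .
    qed
    then have "eventually (\<lambda>N. a\<^sup>2 \<le> tail N * fact k) sequentially"
      unfolding eventually_sequentially by blast
    with tendsto_mult_left_zero[OF tail_lim] have "a\<^sup>2 \<le> 0"
      by (rule tendsto_lowerbound) simp
    then show ?thesis
      by (simp add: a_def)
  qed
  have "AE x in gauss_measure. F x - G x = 0"
    by (rule hermite_complete[OF square_integrable_diff[OF F G] orthogonal])
  moreover have [measurable]: "F \<in> borel_measurable borel" "G \<in> borel_measurable borel"
    using F G by (simp_all add: square_integrable_def)
  ultimately have "(\<integral>x. (F x - ?h N x)\<^sup>2 \<partial>gauss_measure) = (\<integral>x. (G x - ?h N x)\<^sup>2 \<partial>gauss_measure)" for N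
    by (intro integral_cong_AE; (measurable)?) (auto elim: eventually_mono)
  then show ?thesis
    using G_close integral_power2_nonneg
    by (intro tendsto_sandwich[OF _ _ tendsto_const tail_lim]) (simp_all add: eventually_sequentially)
qed

section \<open>Hermite functionals of a stationary Gaussian sequence\<close>

lemma (in prob_space) centered_gaussian_rv_distributed:
  assumes gaussian: "centered_gaussian_rv M W"
    and "integrable M (\<lambda>\<omega>. (W \<omega>)\<^sup>2)" and variance: "(\<integral>\<omega>. (W \<omega>)\<^sup>2 \<partial>M) = v" and "v > 0"
  shows "distributed M lborel W (normal_density 0 (sqrt v))"
proof -
  from gaussian consider "AE \<omega> in M. W \<omega> = 0"
    | \<sigma> where "\<sigma> > 0" "distributed M lborel W (normal_density 0 \<sigma>)"
    unfolding centered_gaussian_rv_def by blast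
  then show ?thesis
  proof cases
    case 1
    then have "AE \<omega> in M. (W \<omega>)\<^sup>2 = 0"
      by eventually_elim simp
    then have "(\<integral>\<omega>. (W \<omega>)\<^sup>2 \<partial>M) = (\<integral>\<omega>. 0 \<partial>M)"
      by (rule integral_cong_AE[rotated 2]) (use gaussian in \<open>auto simp: centered_gaussian_rv_def\<close>)
    then show ?thesis
      using variance \<open>v > 0\<close> by simp
  next
    case (2 \<sigma>)
    have "variance W = \<sigma>\<^sup>2"
      by (rule normal_distributed_variance[OF 2])
    moreover have "expectation W = 0"
      by (rule normal_distributed_expectation[OF 2])
    ultimately have "\<sigma>\<^sup>2 = v"
      using variance by simp
    then have "\<sigma> = sqrt v"
      using \<open>\<sigma> > 0\<close> by (metis abs_of_pos real_sqrt_abs)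
    then show ?thesis
      using 2 by simp
  qed
qed

locale stationary_gaussian_sequence = prob_space M for M :: "'a measure" +
  fixes X :: "int \<Rightarrow> 'a \<Rightarrow> real" and r :: "int \<Rightarrow> real"
  assumes gaussian: "centered_gaussian_process M X"
    and covariance: "\<And>i t. (\<integral>\<omega>. X i \<omega> * X (i + t) \<omega> \<partial>M) = r t"
    and variance_1: "r 0 = 1"
begin

lemma centered_gaussian_rv_combination:
  "finite S \<Longrightarrow> centered_gaussian_rv M (\<lambda>\<omega>. \<Sum>i\<in>S. a i * X i \<omega>)"
  using gaussian unfolding centered_gaussian_process_def by blast

lemma measurable_X [measurable]: "X i \<in> borel_measurable M"
  using centered_gaussian_rv_combination[of "{i}" "\<lambda>_. 1"] by (simp add: centered_gaussian_rv_def)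

lemma integral_X_mult_X: "(\<integral>\<omega>. X i \<omega> * X j \<omega> \<partial>M) = r (j - i)"
  using covariance[of i "j - i"] by simp

text \<open>A non-integrable function has Bochner integral \<open>0\<close>, but \<open>E[X\<^sub>i\<^sup>2] = r 0 = 1\<close>.\<close>

lemma integrable_X_mult_X: "integrable M (\<lambda>\<omega>. X i \<omega> * X j \<omega>)"
proof -
  have square: "integrable M (\<lambda>\<omega>. X i \<omega> * X i \<omega>)" for i
    using not_integrable_integral_eq integral_X_mult_X[of i i] variance_1 by force
  show ?thesis
  proof (rule Bochner_Integration.integrable_bound)
    show "integrable M (\<lambda>\<omega>. (X i \<omega>)\<^sup>2 + (X j \<omega>)\<^sup>2)"
      using square by (simp add: power2_eq_square)
    show "AE \<omega> in M. norm (X i \<omega> * X j \<omega>) \<le> norm ((X i \<omega>)\<^sup>2 + (X j \<omega>)\<^sup>2)"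
      using abs_mult_le_sum_power2 by (intro AE_I2) simp
  qed simp
qed

lemma distributed_X: "distributed M lborel (X i) std_normal_density"
proof -
  have "distributed M lborel (\<lambda>\<omega>. \<Sum>k\<in>{i}. 1 * X k \<omega>) (normal_density 0 (sqrt 1))"
    by (rule centered_gaussian_rv_distributed[OF centered_gaussian_rv_combination])
      (use integrable_X_mult_X[of i i] integral_X_mult_X[of i i] variance_1 in \<open>simp_all add: power2_eq_square\<close>)
  then show ?thesis
    by simp
qed

lemma std_normal_pair_decorrelated:
  assumes "t \<noteq> 0" and "\<bar>r t\<bar> < 1"
  shows "std_normal_pair M (X 0) (\<lambda>\<omega>. (X t \<omega> - r t * X 0 \<omega>) / sqrt (1 - (r t)\<^sup>2))"
proof -
  define \<rho> where "\<rho> = r t"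
  define s where "s = sqrt (1 - \<rho>\<^sup>2)"
  have "\<rho>\<^sup>2 < 1"
    using assms(2) unfolding \<rho>_def by (simp add: abs_square_less_1)
  then have s2: "s\<^sup>2 = 1 - \<rho>\<^sup>2" and "s > 0"
    unfolding s_def by simp_all
  have combination: "distributed M lborel (\<lambda>\<omega>. a * X 0 \<omega> + (X t \<omega> - \<rho> * X 0 \<omega>) / s)
      (normal_density 0 (sqrt (a\<^sup>2 + 1)))" for a
  proof -
    define c0 where "c0 = a - \<rho> / s"
    define c1 where "c1 = 1 / s"
    define c where "c i = (if i = 0 then c0 else c1)" for i :: int
    have W: "(\<lambda>\<omega>. a * X 0 \<omega> + (X t \<omega> - \<rho> * X 0 \<omega>) / s) = (\<lambda>\<omega>. \<Sum>k\<in>{0, t}. c k * X k \<omega>)"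
      using assms(1) \<open>s > 0\<close> by (auto simp: fun_eq_iff c_def c0_def c1_def field_simps)
    have square: "(\<lambda>\<omega>. (\<Sum>k\<in>{0, t}. c k * X k \<omega>)\<^sup>2) =
        (\<lambda>\<omega>. c0\<^sup>2 * (X 0 \<omega> * X 0 \<omega>) + 2 * c0 * c1 * (X 0 \<omega> * X t \<omega>) + c1\<^sup>2 * (X t \<omega> * X t \<omega>))"
      using assms(1) by (auto simp: fun_eq_iff c_def power2_eq_square algebra_simps)
    have "integrable M (\<lambda>\<omega>. (\<Sum>k\<in>{0, t}. c k * X k \<omega>)\<^sup>2)"
      unfolding square by (intro Bochner_Integration.integrable_add integrable_mult_right integrable_X_mult_X)
    moreover have "(\<integral>\<omega>. (\<Sum>k\<in>{0, t}. c k * X k \<omega>)\<^sup>2 \<partial>M) = c0\<^sup>2 + 2 * c0 * c1 * \<rho> + c1\<^sup>2"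
      unfolding square
      by (simp add: integrable_X_mult_X integral_X_mult_X variance_1 \<rho>_def Bochner_Integration.integral_add
          Bochner_Integration.integrable_add)
    moreover have "c0\<^sup>2 + 2 * c0 * c1 * \<rho> + c1\<^sup>2 = a\<^sup>2 + (1 - \<rho>\<^sup>2) / s\<^sup>2"
      using \<open>s > 0\<close> unfolding c0_def c1_def by (simp add: field_simps power2_eq_square)
    moreover have "(1 - \<rho>\<^sup>2) / s\<^sup>2 = 1"
      using \<open>s > 0\<close> by (simp add: s2[symmetric])
    ultimately have "distributed M lborel (\<lambda>\<omega>. \<Sum>k\<in>{0, t}. c k * X k \<omega>) (normal_density 0 (sqrt (a\<^sup>2 + 1)))"
      by (intro centered_gaussian_rv_distributed centered_gaussian_rv_combination) (simp_all add: add_nonneg_pos)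
    then show ?thesis
      by (simp only: W)
  qed
  show ?thesis
  proof unfold_locales
    show "distributed M lborel (X 0) std_normal_density"
      by (rule distributed_X)
    show "distributed M lborel (\<lambda>\<omega>. a * X 0 \<omega> + (X t \<omega> - r t * X 0 \<omega>) / sqrt (1 - (r t)\<^sup>2))
        (normal_density 0 (sqrt (a\<^sup>2 + 1)))" for a
      using combination[of a] by (simp add: \<rho>_def s_def)
    show "distributed M lborel (\<lambda>\<omega>. (X t \<omega> - r t * X 0 \<omega>) / sqrt (1 - (r t)\<^sup>2)) std_normal_density"
      using combination[of 0] by (simp add: \<rho>_def s_def)
  qed
qed

lemma
  assumes t: "t \<noteq> 0" and rt: "\<bar>r t\<bar> < 1"
  shows integrable_hermite_X_mult_hermite_X: "integrable M (\<lambda>\<omega>. hermite j (X 0 \<omega>) * hermite k (X t \<omega>))"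
    and integral_hermite_X_mult_hermite_X:
      "(\<integral>\<omega>. hermite j (X 0 \<omega>) * hermite k (X t \<omega>) \<partial>M) = (if j = k then fact k * r t ^ k else 0)"
proof -
  define s where "s = sqrt (1 - (r t)\<^sup>2)"
  have "(r t)\<^sup>2 < 1"
    using rt by (simp add: abs_square_less_1)
  then have unit: "(r t)\<^sup>2 + s\<^sup>2 = 1" and "s > 0"
    unfolding s_def by simp_all
  interpret pair: std_normal_pair M "X 0" "\<lambda>\<omega>. (X t \<omega> - r t * X 0 \<omega>) / s"
    unfolding s_def by (rule std_normal_pair_decorrelated[OF t rt])
  have X_t: "r t * X 0 \<omega> + s * ((X t \<omega> - r t * X 0 \<omega>) / s) = X t \<omega>" for \<omega>
    using \<open>s > 0\<close> by simp
  show "integrable M (\<lambda>\<omega>. hermite j (X 0 \<omega>) * hermite k (X t \<omega>))"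
    using pair.integrable_hermite_correlated[OF unit, of j k] by (simp only: X_t)
  show "(\<integral>\<omega>. hermite j (X 0 \<omega>) * hermite k (X t \<omega>) \<partial>M) = (if j = k then fact k * r t ^ k else 0)"
    using pair.integral_hermite_correlated[OF unit, of j k] by (simp only: X_t)
qed

lemma integral_hermite_partial_sum_X:
  assumes t: "t \<noteq> 0" and rt: "\<bar>r t\<bar> < 1"
  shows "(\<integral>\<omega>. hermite_partial_sum c N (X 0 \<omega>) * hermite_partial_sum c N (X t \<omega>) \<partial>M) =
    (\<Sum>k\<le>N. (c k)\<^sup>2 * fact k * r t ^ k)"
proof -
  have "(\<integral>\<omega>. hermite_partial_sum c N (X 0 \<omega>) * hermite_partial_sum c N (X t \<omega>) \<partial>M) =
      (\<integral>\<omega>. (\<Sum>j\<le>N. \<Sum>k\<le>N. c j * c k * (hermite j (X 0 \<omega>) * hermite k (X t \<omega>))) \<partial>M)"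
    by (simp add: hermite_partial_sum_def sum_product mult_ac)
  also have "\<dots> = (\<Sum>j\<le>N. \<Sum>k\<le>N. c j * c k * (if j = k then fact k * r t ^ k else 0))"
    by (simp add: Bochner_Integration.integral_sum Bochner_Integration.integrable_sum
        integrable_hermite_X_mult_hermite_X[OF t rt] integral_hermite_X_mult_hermite_X[OF t rt])
  also have "\<dots> = (\<Sum>k\<le>N. (c k)\<^sup>2 * fact k * r t ^ k)"
    by (simp add: if_distrib sum.delta power2_eq_square mult_ac cong: if_cong)
  finally show ?thesis .
qed

lemma
  assumes "square_integrable gauss_measure f"
  shows square_integrable_comp_X: "square_integrable M (\<lambda>\<omega>. f (X i \<omega>))"
    and integral_power2_comp_X: "(\<integral>\<omega>. (f (X i \<omega>))\<^sup>2 \<partial>M) = (\<integral>x. (f x)\<^sup>2 \<partial>gauss_measure)"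
proof -
  have [measurable]: "f \<in> borel_measurable borel"
    using assms by (simp add: square_integrable_def)
  show "square_integrable M (\<lambda>\<omega>. f (X i \<omega>))"
    using integrable_std_normal_distributed_iff[OF distributed_X, of "\<lambda>x. (f x)\<^sup>2"] assms
    by (simp add: square_integrable_def)
  show "(\<integral>\<omega>. (f (X i \<omega>))\<^sup>2 \<partial>M) = (\<integral>x. (f x)\<^sup>2 \<partial>gauss_measure)"
    using integral_std_normal_distributed[OF distributed_X, of "\<lambda>x. (f x)\<^sup>2"] by simp
qed

lemma Cauchy_Schwarz_comp_X:
  assumes "square_integrable gauss_measure f" "square_integrable gauss_measure g"
  shows "(\<integral>\<omega>. f (X i \<omega>) * g (X j \<omega>) \<partial>M)\<^sup>2 \<le>
    (\<integral>x. (f x)\<^sup>2 \<partial>gauss_measure) * (\<integral>x. (g x)\<^sup>2 \<partial>gauss_measure)"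
  using Cauchy_Schwarz_integral[OF square_integrable_comp_X[OF assms(1)] square_integrable_comp_X[OF assms(2)]]
  by (simp only: integral_power2_comp_X assms)

end

lemma tendsto_zero_of_power2_le:
  fixes f g :: "nat \<Rightarrow> real"
  assumes "\<And>N. (f N)\<^sup>2 \<le> g N" and "g \<longlonglongrightarrow> 0"
  shows "f \<longlonglongrightarrow> 0"
proof -
  have "(\<lambda>N. (f N)\<^sup>2) \<longlonglongrightarrow> 0"
    by (rule tendsto_sandwich[of "\<lambda>_. 0" _ _ g]) (use assms in auto)
  then have "(\<lambda>N. sqrt ((f N)\<^sup>2)) \<longlonglongrightarrow> sqrt 0"
    by (rule tendsto_real_sqrt)
  then show ?thesis
    by (simp add: tendsto_rabs_zero_cancel)
qed

context stationary_gaussian_sequence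
begin

theorem covariance_hermite_expansion:
  assumes F: "square_integrable gauss_measure F" and t: "t \<noteq> 0" and rt: "\<bar>r t\<bar> < 1"
  shows "(\<lambda>N. \<Sum>k\<le>N. (hermite_coeff F k)\<^sup>2 * fact k * r t ^ k) \<longlonglongrightarrow> (\<integral>\<omega>. F (X 0 \<omega>) * F (X t \<omega>) \<partial>M)"
proof -
  define h where "h N = hermite_partial_sum (hermite_coeff F) N" for N
  define d where "d N = (\<integral>x. (F x - h N x)\<^sup>2 \<partial>gauss_measure)" for N
  define Q where "Q = (\<integral>x. (F x)\<^sup>2 \<partial>gauss_measure)"
  have h: "square_integrable gauss_measure (h N)" for N
    unfolding h_def by (rule square_integrable_hermite_partial_sum)
  have F_h: "square_integrable gauss_measure (\<lambda>x. F x - h N x)" for N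
    by (rule square_integrable_diff[OF F h])
  have Qd_lim: "(\<lambda>N. Q * d N) \<longlonglongrightarrow> 0"
    using tendsto_mult_right_zero[OF hermite_expansion_L2_convergence[OF F]] by (simp add: d_def h_def)
  define e1 where "e1 N = (\<integral>\<omega>. (F (X 0 \<omega>) - h N (X 0 \<omega>)) * F (X t \<omega>) \<partial>M)" for N
  define e2 where "e2 N = (\<integral>\<omega>. h N (X 0 \<omega>) * (F (X t \<omega>) - h N (X t \<omega>)) \<partial>M)" for N
  have "(e1 N)\<^sup>2 \<le> Q * d N" for N
    using Cauchy_Schwarz_comp_X[OF F_h[of N] F, of 0 t] by (simp add: e1_def d_def Q_def mult.commute)
  then have e1_lim: "e1 \<longlonglongrightarrow> 0"
    by (rule tendsto_zero_of_power2_le[OF _ Qd_lim])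
  have "(e2 N)\<^sup>2 \<le> Q * d N" for N
  proof -
    have "(e2 N)\<^sup>2 \<le> (\<integral>x. (h N x)\<^sup>2 \<partial>gauss_measure) * d N"
      using Cauchy_Schwarz_comp_X[OF h[of N] F_h[of N], of 0 t] by (simp add: e2_def d_def)
    also have "\<dots> \<le> Q * d N"
      using hermite_Bessel_inequality[OF F, of N]
      by (intro mult_right_mono) (simp_all add: d_def h_def Q_def integral_power2_nonneg integral_hermite_partial_sum_power2)
    finally show ?thesis .
  qed
  then have e2_lim: "e2 \<longlonglongrightarrow> 0"
    by (rule tendsto_zero_of_power2_le[OF _ Qd_lim])
  have split: "(\<integral>\<omega>. F (X 0 \<omega>) * F (X t \<omega>) \<partial>M) =
      (\<integral>\<omega>. h N (X 0 \<omega>) * h N (X t \<omega>) \<partial>M) + e1 N + e2 N" for N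
  proof -
    have "(\<integral>\<omega>. F (X 0 \<omega>) * F (X t \<omega>) \<partial>M) =
        (\<integral>\<omega>. h N (X 0 \<omega>) * h N (X t \<omega>) + ((F (X 0 \<omega>) - h N (X 0 \<omega>)) * F (X t \<omega>) +
          h N (X 0 \<omega>) * (F (X t \<omega>) - h N (X t \<omega>))) \<partial>M)"
      by (rule Bochner_Integration.integral_cong) (simp_all add: algebra_simps)
    moreover have "integrable M (\<lambda>\<omega>. (F (X 0 \<omega>) - h N (X 0 \<omega>)) * F (X t \<omega>))"
      "integrable M (\<lambda>\<omega>. h N (X 0 \<omega>) * (F (X t \<omega>) - h N (X t \<omega>)))"
      "integrable M (\<lambda>\<omega>. h N (X 0 \<omega>) * h N (X t \<omega>))"
      by (intro integrable_mult_square_integrable square_integrable_comp_X F h F_h)+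
    ultimately show ?thesis
      unfolding e1_def e2_def by (simp add: Bochner_Integration.integral_add)
  qed
  have "(\<lambda>N. (\<integral>\<omega>. F (X 0 \<omega>) * F (X t \<omega>) \<partial>M) - e1 N - e2 N) \<longlonglongrightarrow>
      (\<integral>\<omega>. F (X 0 \<omega>) * F (X t \<omega>) \<partial>M) - 0 - 0"
    by (intro tendsto_diff tendsto_const e1_lim e2_lim)
  moreover have "(\<integral>\<omega>. F (X 0 \<omega>) * F (X t \<omega>) \<partial>M) - e1 N - e2 N =
      (\<Sum>k\<le>N. (hermite_coeff F k)\<^sup>2 * fact k * r t ^ k)" for N
    using split[of N] integral_hermite_partial_sum_X[OF t rt, of "hermite_coeff F" N] by (simp add: h_def)
  ultimately show ?thesis
    by simp
qed

end

section \<open>Summability of the covariance\<close>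

lemma power_series_lowest_order_estimate:
  fixes a :: "nat \<Rightarrow> real"
  assumes nonneg: "\<And>k. 0 \<le> a k" and summable: "summable a" and below: "\<And>k. k < K \<Longrightarrow> a k = 0"
    and \<rho>: "\<bar>\<rho>\<bar> \<le> 1" and sum: "(\<lambda>N. \<Sum>k\<le>N. a k * \<rho> ^ k) \<longlonglongrightarrow> v"
  shows "\<bar>v - a K * \<rho> ^ K\<bar> \<le> \<bar>\<rho>\<bar> ^ Suc K * suminf a"
proof -
  have partial: "\<bar>(\<Sum>k\<le>N. a k * \<rho> ^ k) - a K * \<rho> ^ K\<bar> \<le> \<bar>\<rho>\<bar> ^ Suc K * suminf a" if "K \<le> N" for N
  proof -
    have "(\<Sum>k\<le>N. a k * \<rho> ^ k) = a K * \<rho> ^ K + (\<Sum>k\<in>{..N} - {K}. a k * \<rho> ^ k)"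
      using that by (subst sum.remove[of _ K]) auto
    then have "\<bar>(\<Sum>k\<le>N. a k * \<rho> ^ k) - a K * \<rho> ^ K\<bar> \<le> (\<Sum>k\<in>{..N} - {K}. \<bar>a k * \<rho> ^ k\<bar>)"
      by (simp add: sum_abs)
    also have "\<dots> \<le> (\<Sum>k\<in>{..N} - {K}. a k * \<bar>\<rho>\<bar> ^ Suc K)"
    proof (rule sum_mono)
      fix k
      assume k: "k \<in> {..N} - {K}"
      show "\<bar>a k * \<rho> ^ k\<bar> \<le> a k * \<bar>\<rho>\<bar> ^ Suc K"
      proof (cases "k < K")
        case False
        with k have "Suc K \<le> k" by auto
        then have "\<bar>\<rho>\<bar> ^ k \<le> \<bar>\<rho>\<bar> ^ Suc K"
          using \<rho> by (intro power_decreasing) auto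
        then show ?thesis
          using nonneg[of k] by (simp add: abs_mult power_abs mult_left_mono)
      qed (simp add: below)
    qed
    also have "\<dots> \<le> suminf a * \<bar>\<rho>\<bar> ^ Suc K"
      unfolding sum_distrib_right[symmetric]
      by (intro mult_right_mono sum_le_suminf summable nonneg) auto
    finally show ?thesis
      by (simp add: mult.commute)
  qed
  have "(\<lambda>N. \<bar>(\<Sum>k\<le>N. a k * \<rho> ^ k) - a K * \<rho> ^ K\<bar>) \<longlonglongrightarrow> \<bar>v - a K * \<rho> ^ K\<bar>"
    by (intro tendsto_rabs tendsto_diff sum tendsto_const)
  then show ?thesis
    by (rule LIMSEQ_le_const2) (use partial in \<open>auto intro: exI[of _ K]\<close>)
qed

lemma power_series_lowest_order_bounds:
  fixes a :: "nat \<Rightarrow> real"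
  assumes nonneg: "\<And>k. 0 \<le> a k" and summable: "summable a"
    and below: "\<And>k. k < K \<Longrightarrow> a k = 0" and pos: "a K > 0"
  obtains \<delta> where "\<delta> > 0"
    and "\<And>\<rho> v. \<bar>\<rho>\<bar> \<le> \<delta> \<Longrightarrow> (\<lambda>N. \<Sum>k\<le>N. a k * \<rho> ^ k) \<longlonglongrightarrow> v \<Longrightarrow>
      a K / 2 * \<bar>\<rho>\<bar> ^ K \<le> \<bar>v\<bar> \<and> \<bar>v\<bar> \<le> (a K + suminf a) * \<bar>\<rho>\<bar> ^ K"
proof
  define T where "T = suminf a"
  have "T \<ge> 0"
    unfolding T_def by (rule suminf_nonneg[OF summable nonneg])
  define \<delta> where "\<delta> = min 1 (a K / (2 * (T + 1)))"
  show "\<delta> > 0"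
    using pos \<open>T \<ge> 0\<close> by (simp add: \<delta>_def)
  fix \<rho> v
  assume \<rho>: "\<bar>\<rho>\<bar> \<le> \<delta>" and sum: "(\<lambda>N. \<Sum>k\<le>N. a k * \<rho> ^ k) \<longlonglongrightarrow> v"
  have "\<bar>\<rho>\<bar> \<le> 1"
    using \<rho> by (simp add: \<delta>_def)
  have estimate: "\<bar>v - a K * \<rho> ^ K\<bar> \<le> \<bar>\<rho>\<bar> * T * \<bar>\<rho>\<bar> ^ K"
    using power_series_lowest_order_estimate[OF nonneg summable below \<open>\<bar>\<rho>\<bar> \<le> 1\<close> sum]
    by (simp add: T_def mult_ac)
  have "\<bar>\<rho>\<bar> * T \<le> a K / (2 * (T + 1)) * T"
    using \<rho> \<open>T \<ge> 0\<close> by (intro mult_right_mono) (auto simp: \<delta>_def)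
  also have "\<dots> \<le> a K / 2"
    using pos \<open>T \<ge> 0\<close> by (simp add: field_simps)
  finally have "\<bar>\<rho>\<bar> * T * \<bar>\<rho>\<bar> ^ K \<le> a K / 2 * \<bar>\<rho>\<bar> ^ K"
    by (intro mult_right_mono) simp_all
  moreover have "\<bar>\<rho>\<bar> * T * \<bar>\<rho>\<bar> ^ K \<le> T * \<bar>\<rho>\<bar> ^ K"
    using \<open>\<bar>\<rho>\<bar> \<le> 1\<close> \<open>T \<ge> 0\<close> by (intro mult_right_mono) (simp_all add: mult_left_le_one_le)
  moreover have "\<bar>a K * \<rho> ^ K\<bar> = a K * \<bar>\<rho>\<bar> ^ K"
    using pos by (simp add: abs_mult power_abs)
  moreover have "\<bar>v\<bar> \<le> \<bar>v - a K * \<rho> ^ K\<bar> + \<bar>a K * \<rho> ^ K\<bar>"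
    and "\<bar>a K * \<rho> ^ K\<bar> \<le> \<bar>v - a K * \<rho> ^ K\<bar> + \<bar>v\<bar>"
    by arith+
  ultimately show "a K / 2 * \<bar>\<rho>\<bar> ^ K \<le> \<bar>v\<bar> \<and> \<bar>v\<bar> \<le> (a K + suminf a) * \<bar>\<rho>\<bar> ^ K"
    using estimate unfolding T_def distrib_right by linarith
qed

lemma summable_on_comparison_cofinite:
  fixes f g :: "'a \<Rightarrow> real"
  assumes "g summable_on UNIV" and "finite E" and "\<And>t. t \<notin> E \<Longrightarrow> 0 \<le> f t \<and> f t \<le> C * g t"
  shows "f summable_on UNIV"
proof -
  have "(\<lambda>t. C * g t) summable_on (UNIV - E)"
    by (intro summable_on_cmult_right summable_on_cofin_subset assms)
  then have "f summable_on (UNIV - E)"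
    by (rule summable_on_comparison_test) (use assms(3) in auto)
  moreover have "f summable_on E"
    using \<open>finite E\<close> by (rule summable_on_finite)
  ultimately have "f summable_on ((UNIV - E) \<union> E)"
    by (rule summable_on_union)
  then show ?thesis
    by simp
qed

lemma summable_on_iff_if_comparable_cofinite:
  fixes f g :: "'a \<Rightarrow> real"
  assumes "finite E" and "A > 0" and bounds: "\<And>t. t \<notin> E \<Longrightarrow> 0 \<le> A * g t \<and> A * g t \<le> f t \<and> f t \<le> B * g t"
  shows "f summable_on UNIV \<longleftrightarrow> g summable_on UNIV"
proof
  assume "f summable_on UNIV"
  then show "g summable_on UNIV"
  proof (rule summable_on_comparison_cofinite[OF _ \<open>finite E\<close>])
    fix t
    assume "t \<notin> E"
    then show "0 \<le> g t \<and> g t \<le> 1 / A * f t"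
      using bounds[of t] \<open>A > 0\<close> by (simp add: field_simps zero_le_mult_iff)
  qed
next
  assume "g summable_on UNIV"
  then show "f summable_on UNIV"
  proof (rule summable_on_comparison_cofinite[OF _ \<open>finite E\<close>])
    fix t
    assume "t \<notin> E"
    then show "0 \<le> f t \<and> f t \<le> B * g t"
      using bounds[of t] by simp
  qed
qed

lemma finite_abs_gt_of_tendsto_zero_at_top_at_bot:
  fixes r :: "int \<Rightarrow> real"
  assumes "(r \<longlongrightarrow> 0) at_top" and "(r \<longlongrightarrow> 0) at_bot" and "\<delta> > 0"
  shows "finite {t. \<delta> < \<bar>r t\<bar>}"
proof -
  obtain T1 where T1: "\<And>t. t \<ge> T1 \<Longrightarrow> \<bar>r t\<bar> < \<delta>"
    using tendstoD[OF assms(1) assms(3)] unfolding eventually_at_top_linorder by auto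
  obtain T2 where T2: "\<And>t. t \<le> T2 \<Longrightarrow> \<bar>r t\<bar> < \<delta>"
    using tendstoD[OF assms(2) assms(3)] unfolding eventually_at_bot_linorder by auto
  have "{t. \<delta> < \<bar>r t\<bar>} \<subseteq> {T2..T1}"
  proof
    fix t
    assume "t \<in> {t. \<delta> < \<bar>r t\<bar>}"
    then have "\<not> T1 \<le> t" "\<not> t \<le> T2"
      using T1[of t] T2[of t] by auto
    then show "t \<in> {T2..T1}"
      by auto
  qed
  then show ?thesis
    by (rule finite_subset) simp
qed

lemma hermite_coeff_hermite_rank:
  assumes "square_integrable gauss_measure H" and "\<not> (AE x in gauss_measure. H x = 0)"
  shows "hermite_coeff H (hermite_rank H) \<noteq> 0"
proof -
  have "\<exists>k. hermite_coeff H k \<noteq> 0"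
  proof (rule ccontr)
    assume "\<not> (\<exists>k. hermite_coeff H k \<noteq> 0)"
    then have "AE x in gauss_measure. H x = 0"
      by (intro hermite_complete[OF assms(1)]) (simp add: integral_mult_hermite)
    with assms(2) show False ..
  qed
  then show ?thesis
    unfolding hermite_rank_def by (rule LeastI_ex)
qed

context stationary_gaussian_sequence
begin

theorem summable_hermite_covariance_iff:
  assumes H: "square_integrable gauss_measure H" and nonzero: "\<not> (AE x in gauss_measure. H x = 0)"
    and "(r \<longlongrightarrow> 0) at_top" and "(r \<longlongrightarrow> 0) at_bot"
  shows "((\<lambda>t. \<bar>\<integral>\<omega>. H (X 0 \<omega>) * H (X t \<omega>) \<partial>M\<bar>) summable_on UNIV) \<longleftrightarrow>
    ((\<lambda>t. \<bar>r t\<bar> ^ hermite_rank H) summable_on UNIV)"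
proof -
  define a where "a k = (hermite_coeff H k)\<^sup>2 * fact k" for k
  define K where "K = hermite_rank H"
  define rH where "rH t = (\<integral>\<omega>. H (X 0 \<omega>) * H (X t \<omega>) \<partial>M)" for t
  have nonneg: "0 \<le> a k" for k
    by (simp add: a_def)
  have pos: "a K > 0"
    using hermite_coeff_hermite_rank[OF H nonzero] by (simp add: a_def K_def)
  have below: "a k = 0" if "k < K" for k
    using not_less_Least[OF that[unfolded K_def hermite_rank_def]] by (simp add: a_def)
  have summable: "summable a"
    unfolding a_def by (rule summable_hermite_coeff_power2[OF H])
  obtain \<delta> where "\<delta> > 0" and bounds: "\<And>\<rho> v. \<bar>\<rho>\<bar> \<le> \<delta> \<Longrightarrow> (\<lambda>N. \<Sum>k\<le>N. a k * \<rho> ^ k) \<longlonglongrightarrow> v \<Longrightarrow>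
      a K / 2 * \<bar>\<rho>\<bar> ^ K \<le> \<bar>v\<bar> \<and> \<bar>v\<bar> \<le> (a K + suminf a) * \<bar>\<rho>\<bar> ^ K"
    using power_series_lowest_order_bounds[of a K, OF nonneg summable below pos] by blast
  define E where "E = insert 0 {t. min \<delta> (1/2) < \<bar>r t\<bar>}"
  have "finite E"
    unfolding E_def using \<open>\<delta> > 0\<close>
    by (simp add: finite_abs_gt_of_tendsto_zero_at_top_at_bot[OF assms(3,4)])
  have comparable: "a K / 2 * \<bar>r t\<bar> ^ K \<le> \<bar>rH t\<bar> \<and> \<bar>rH t\<bar> \<le> (a K + suminf a) * \<bar>r t\<bar> ^ K"
    if "t \<notin> E" for t
  proof (rule bounds)
    from that have "t \<noteq> 0" and small: "\<bar>r t\<bar> \<le> min \<delta> (1/2)"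
      by (auto simp: E_def)
    then show "\<bar>r t\<bar> \<le> \<delta>"
      by simp
    show "(\<lambda>N. \<Sum>k\<le>N. a k * r t ^ k) \<longlonglongrightarrow> rH t"
      using covariance_hermite_expansion[OF H \<open>t \<noteq> 0\<close>] small by (simp add: a_def rH_def)
  qed
  show ?thesis
    unfolding rH_def[symmetric] K_def[symmetric]
    by (rule summable_on_iff_if_comparable_cofinite[OF \<open>finite E\<close>, of "a K / 2"]) (use pos comparable in auto)
qed

end

theorem mainTheorem5:
  fixes M :: "'a measure" and X :: "int \<Rightarrow> 'a \<Rightarrow> real" and r :: "int \<Rightarrow> real"
    and H :: "real \<Rightarrow> real"
  assumes "prob_space M"
    and "centered_gaussian_process M X"
    and "\<And>i t. (\<integral>\<omega>. X i \<omega> * X (i + t) \<omega> \<partial>M) = r t"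
    and "r 0 = 1"
    and "(r \<longlongrightarrow> 0) at_top" and "(r \<longlongrightarrow> 0) at_bot"
    and "H \<in> borel_measurable borel"
    and "integrable gauss_measure (\<lambda>x. (H x)\<^sup>2)"
    and "hermite_coeff H 0 = 0"
    and "\<not> (AE x in gauss_measure. H x = 0)"
  shows "((\<lambda>t. \<bar>\<integral>\<omega>. H (X 0 \<omega>) * H (X t \<omega>) \<partial>M\<bar>) summable_on (UNIV :: int set))
     \<longleftrightarrow> ((\<lambda>t. \<bar>r t\<bar> ^ hermite_rank H) summable_on (UNIV :: int set))"
proof -
  interpret stationary_gaussian_sequence M X r
    using assms(1-4) by (simp add: stationary_gaussian_sequence_def stationary_gaussian_sequence_axioms_def)
  have "square_integrable gauss_measure H"
    using assms(7,8) by (simp add: square_integrable_def)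
  then show ?thesis
    using summable_hermite_covariance_iff assms(5,6,10) by blast
qed

end
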